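(* Let $(G,E)$ be a connected simple graph with countably infinite vertex set and bounded degree, $\mu$ a conductance with $(G,\mu)$ satisfying $(p_0)$, $R$ the effective resistance, and assume $\mu$ satisfies $(\mathrm{VD})_R$, $\mathrm{diam}(G,R)=\infty$ and $V_R(x,r)<\infty$ for all $x\in G$, $r>0$. Then (1) there exist a metric $d$ on $G$ and $\beta>\alpha\ge1$ such that $d$ is quasisymmetric to $R$; $R(x,y)V_d(x,d(x,y))\asymp d(x,y)^\beta$ for all $x,y\in G$; and there is $C>0$ with $V_d(x,r)\le C(r/s)^\alpha V_d(x,s)$ for all $x\in G$ and $r>s>0$. (2) Moreover $d$ can be chosen to additionally satisfy: $\inf_{x\ne y}d(x,y)=r_0>0$; there is $C_+>0$ with $d(x,y)\le C_+$ for all $x\sim y$; and $B_d(x,r)$ is finite for all $x\in G$, $r>0$.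
   Context: $\mu_x=\sum_{y\sim x}\mu_{xy}$, $\mu(A)=\sum_{x\in A}\mu_x$, $V_\rho(x,r)=\mu(B_\rho(x,r))$. $(p_0)$: $\mu_{xy}/\mu_x\ge p_0>0$ for $x\sim y$. $(\mathrm{VD})_R$: $V_R(x,2r)\le CV_R(x,r)$ for all $x$, $r>0$. $R(x,y)=(\inf\{\frac12\sum_{(u,v)\in E}(f(u)-f(v))^2\mu_{uv}:f(x)=1,f(y)=0\})^{-1}$. Quasisymmetry: $R(x,y)$... i.e. $d$ is quasisymmetric to $R$ if $R(x,y)/R(x,z)\le\theta(d(x,y)/d(x,z))$ for all $x\ne z$ and some homeomorphism $\theta$ of $[0,\infty)$. *)

theory Defs
  imports "HOL-Analysis.Analysis" "HOL-Library.Countable_Set"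
begin

definition simple_graph :: "('a \<Rightarrow> 'a \<Rightarrow> bool) \<Rightarrow> bool" where
  "simple_graph E \<longleftrightarrow> (\<forall>x y. E x y \<longrightarrow> E y x) \<and> (\<forall>x. \<not> E x x)"

definition connected_graph :: "('a \<Rightarrow> 'a \<Rightarrow> bool) \<Rightarrow> bool" where
  "connected_graph E \<longleftrightarrow> (\<forall>x y. E\<^sup>*\<^sup>* x y)"

definition bounded_degree :: "('a \<Rightarrow> 'a \<Rightarrow> bool) \<Rightarrow> bool" where
  "bounded_degree E \<longleftrightarrow> (\<exists>M::nat. \<forall>x. finite {y. E x y} \<and> card {y. E x y} \<le> M)"

text \<open>A conductance: symmetric, strictly positive on edges (values off edges are irrelevant).\<close>
definition conductance :: "('a \<Rightarrow> 'a \<Rightarrow> bool) \<Rightarrow> ('a \<Rightarrow> 'a \<Rightarrow> real) \<Rightarrow> bool" where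
  "conductance E mu \<longleftrightarrow> (\<forall>x y. E x y \<longrightarrow> mu x y > 0 \<and> mu x y = mu y x)"

definition vmeas :: "('a \<Rightarrow> 'a \<Rightarrow> bool) \<Rightarrow> ('a \<Rightarrow> 'a \<Rightarrow> real) \<Rightarrow> 'a \<Rightarrow> real" where
  "vmeas E mu x = (\<Sum>y\<in>{y. E x y}. mu x y)"

definition p0_cond :: "('a \<Rightarrow> 'a \<Rightarrow> bool) \<Rightarrow> ('a \<Rightarrow> 'a \<Rightarrow> real) \<Rightarrow> bool" where
  "p0_cond E mu \<longleftrightarrow> (\<exists>p0>0. \<forall>x y. E x y \<longrightarrow> mu x y / vmeas E mu x \<ge> p0)"

definition gmeas :: "('a \<Rightarrow> 'a \<Rightarrow> bool) \<Rightarrow> ('a \<Rightarrow> 'a \<Rightarrow> real) \<Rightarrow> 'a set \<Rightarrow> ennreal" where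
  "gmeas E mu A = (\<Sum>\<^sub>\<infinity>x\<in>A. ennreal (vmeas E mu x))"

definition gball :: "('a \<Rightarrow> 'a \<Rightarrow> real) \<Rightarrow> 'a \<Rightarrow> real \<Rightarrow> 'a set" where
  "gball rho x r = {y. rho x y < r}"

definition gvol :: "('a \<Rightarrow> 'a \<Rightarrow> bool) \<Rightarrow> ('a \<Rightarrow> 'a \<Rightarrow> real) \<Rightarrow> ('a \<Rightarrow> 'a \<Rightarrow> real) \<Rightarrow> 'a \<Rightarrow> real \<Rightarrow> ennreal" where
  "gvol E mu rho x r = gmeas E mu (gball rho x r)"

definition energy :: "('a \<Rightarrow> 'a \<Rightarrow> bool) \<Rightarrow> ('a \<Rightarrow> 'a \<Rightarrow> real) \<Rightarrow> ('a \<Rightarrow> real) \<Rightarrow> ennreal" where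
  "energy E mu f = (\<Sum>\<^sub>\<infinity>(u,v)\<in>{(u,v). E u v}. ennreal ((f u - f v)\<^sup>2 * mu u v)) / 2"

definition eff_res :: "('a \<Rightarrow> 'a \<Rightarrow> bool) \<Rightarrow> ('a \<Rightarrow> 'a \<Rightarrow> real) \<Rightarrow> 'a \<Rightarrow> 'a \<Rightarrow> real" where
  "eff_res E mu x y = enn2real (inverse (INF f\<in>{f. f x = 1 \<and> f y = 0}. energy E mu f))"

definition volume_doubling :: "('a \<Rightarrow> 'a \<Rightarrow> bool) \<Rightarrow> ('a \<Rightarrow> 'a \<Rightarrow> real) \<Rightarrow> ('a \<Rightarrow> 'a \<Rightarrow> real) \<Rightarrow> bool" where
  "volume_doubling E mu rho \<longleftrightarrow>
     (\<exists>C. \<forall>x r. r > 0 \<longrightarrow> gvol E mu rho x (2 * r) \<le> ennreal C * gvol E mu rho x r)"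

definition is_metric :: "('a \<Rightarrow> 'a \<Rightarrow> real) \<Rightarrow> bool" where
  "is_metric d \<longleftrightarrow> (\<forall>x y. d x y \<ge> 0) \<and> (\<forall>x y. d x y = 0 \<longleftrightarrow> x = y)
     \<and> (\<forall>x y. d x y = d y x) \<and> (\<forall>x y z. d x z \<le> d x y + d y z)"

definition quasisymmetric_to :: "('a \<Rightarrow> 'a \<Rightarrow> real) \<Rightarrow> ('a \<Rightarrow> 'a \<Rightarrow> real) \<Rightarrow> bool" where
  "quasisymmetric_to d R \<longleftrightarrow>
     (\<exists>\<theta> \<theta>'. homeomorphism {0::real..} {0..} \<theta> \<theta>' \<and>
        (\<forall>x y z. x \<noteq> z \<longrightarrow> R x y / R x z \<le> \<theta> (d x y / d x z)))"

end

theory Submission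
  imports Defs
begin

text \<open>With \<open>h x \<sigma> = \<sigma> * V\<^sub>R(x, \<sigma>)\<close>, put \<open>D(x, y) = R(x, y) * (V\<^sub>R(x, R(x, y)) + V\<^sub>R(y, R(x, y)))\<close>.
  Volume doubling makes \<open>D\<close> comparable to \<open>h x (R x y)\<close> and a quasi-ultrametric,
  \<open>D(x, z) \<le> K * max (D(x, y)) (D(y, z))\<close>. So \<open>\<rho> = D powr (1 / \<beta>)\<close>, with \<open>K powr (2 / \<beta>) = 2\<close>,
  satisfies Frink's four-point inequality, and the infimum \<open>d\<close> of the \<open>\<rho>\<close>-lengths of chains is a
  metric with \<open>\<rho> / 2 \<le> d \<le> \<rho>\<close>; hence \<open>d powr \<beta>\<close>, \<open>D\<close> and \<open>R(x, y) * V\<^sub>R(x, R(x, y))\<close> are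
  comparable. Balls of \<open>d\<close> are then squeezed between resistance balls of comparable radii, which
  gives \<open>R(x, y) * V\<^sub>d(x, d(x, y)) \<asymp> d(x, y) powr \<beta>\<close>. Inverting the polynomial growth
  \<open>V\<^sub>R(x, \<sigma>) \<le> C * (\<sigma> / s) powr \<gamma> * V\<^sub>R(x, s)\<close>, \<open>\<gamma> = log 2 C\<close>, yields quasisymmetry and the
  growth exponent \<open>\<beta> * \<gamma> / (1 + \<gamma>) < \<beta>\<close> for \<open>V\<^sub>d\<close>. Resistance balls are finite because
  doubling bounds the vertex measure from below on them, while their volume is finite.\<close>

lemma infsum_cmult_ennreal:
  fixes f :: "'b \<Rightarrow> ennreal"
  shows "(\<Sum>\<^sub>\<infinity>x\<in>A. c * f x) = c * (\<Sum>\<^sub>\<infinity>x\<in>A. f x)"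
proof -
  have "(\<Sum>\<^sub>\<infinity>x\<in>A. c * f x) = (SUP F\<in>{F. finite F \<and> F \<subseteq> A}. c * sum f F)"
    by (subst nonneg_infsum_complete) (simp_all add: sum_distrib_left)
  also have "\<dots> = c * (SUP F\<in>{F. finite F \<and> F \<subseteq> A}. sum f F)"
    by (simp add: SUP_mult_left_ennreal)
  also have "\<dots> = c * (\<Sum>\<^sub>\<infinity>x\<in>A. f x)"
    by (subst nonneg_infsum_complete[of A f]) simp_all
  finally show ?thesis .
qed

lemma infsum_mono_set_ennreal:
  fixes f :: "'b \<Rightarrow> ennreal"
  assumes "A \<subseteq> B"
  shows "infsum f A \<le> infsum f B"
  by (rule infsum_mono_neutral) (use assms in \<open>auto intro: nonneg_summable_on_complete\<close>)

lemma infsum_ge_member_ennreal: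
  fixes f :: "'b \<Rightarrow> ennreal"
  assumes "a \<in> A"
  shows "f a \<le> infsum f A"
  using infsum_mono_set_ennreal[of "{a}" A f] assms by simp

lemma ennreal_le_if_le_enn2real: "a \<le> enn2real b \<Longrightarrow> ennreal a \<le> b"
  by (cases "b = \<infinity>") (auto simp: ennreal_leI ennreal_enn2real_if intro: order_trans[OF ennreal_leI])

lemma square_add_le: "(a + b)\<^sup>2 \<le> 2 * a\<^sup>2 + 2 * (b::real)\<^sup>2"
proof -
  have "0 \<le> (a - b)\<^sup>2" by simp
  thus ?thesis unfolding power2_sum power2_diff by linarith
qed

lemma max_powr:
  fixes a b e :: real
  assumes "0 \<le> a" "0 \<le> b" "0 < e"
  shows "max a b powr e = max (a powr e) (b powr e)"
proof (cases "a \<le> b")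
  case True
  thus ?thesis using assms powr_mono2[of e a b] by (simp add: max_absorb2)
next
  case False
  thus ?thesis using assms powr_mono2[of e b a] by (simp add: max_absorb1)
qed

lemma doubling_iterate:
  fixes g :: "real \<Rightarrow> real"
  assumes doubling: "\<And>r. 0 < r \<Longrightarrow> g (2 * r) \<le> C * g r"
    and "0 \<le> C" and "0 < s"
  shows "g (2^k * s) \<le> C^k * g s"
proof (induction k)
  case (Suc k)
  have "g (2^Suc k * s) \<le> C * g (2^k * s)"
    using doubling[of "2^k * s"] \<open>0 < s\<close> by (simp add: mult.assoc)
  also have "\<dots> \<le> C * (C^k * g s)"
    using Suc \<open>0 \<le> C\<close> by (intro mult_left_mono) auto
  finally show ?case by simp
qed simp

lemma doubling_imp_polynomial_growth:
  fixes g :: "real \<Rightarrow> real"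
  assumes mono: "\<And>r s. 0 < r \<Longrightarrow> r \<le> s \<Longrightarrow> g r \<le> g s"
    and doubling: "\<And>r. 0 < r \<Longrightarrow> g (2 * r) \<le> C * g r"
    and C: "2 \<le> C" and nonneg: "\<And>r. 0 < r \<Longrightarrow> 0 \<le> g r"
    and s: "0 < s" "s \<le> \<sigma>"
  shows "g \<sigma> \<le> C * (\<sigma> / s) powr log 2 C * g s"
proof -
  define L where "L = log 2 (\<sigma> / s)"
  have ratio: "1 \<le> \<sigma> / s" using s by simp
  hence "0 \<le> L" unfolding L_def by simp
  define k where "k = nat \<lceil>L\<rceil>"
  have k: "L \<le> real k" "real k \<le> L + 1"
    unfolding k_def using \<open>0 \<le> L\<close> by linarith+
  have "\<sigma> / s = 2 powr L" unfolding L_def using ratio by simp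
  also have "\<dots> \<le> 2 ^ k" using k by (simp add: powr_realpow[symmetric])
  finally have "g \<sigma> \<le> g (2^k * s)" using mono s by (simp add: field_simps)
  also have "\<dots> \<le> C^k * g s" using doubling C s by (intro doubling_iterate) auto
  also have "C^k \<le> C * (\<sigma> / s) powr log 2 C"
  proof -
    have "C^k = 2 powr (log 2 C * k)"
      using C by (simp add: powr_powr[symmetric] powr_realpow)
    also have "\<dots> \<le> 2 powr (log 2 C * (L + 1))"
      using k C by (intro powr_mono mult_left_mono) auto
    also have "\<dots> = 2 powr log 2 C * (2 powr L) powr log 2 C"
      by (simp add: powr_add[symmetric] powr_powr algebra_simps)
    also have "\<dots> = C * (\<sigma> / s) powr log 2 C"
      using C ratio unfolding L_def by simp
    finally show ?thesis .
  qed
  hence "C^k * g s \<le> C * (\<sigma> / s) powr log 2 C * g s"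
    using nonneg s by (intro mult_right_mono) auto
  finally show ?thesis .
qed

section \<open>Frink's chain metric\<close>

definition chain_length :: "('a \<Rightarrow> 'a \<Rightarrow> real) \<Rightarrow> (nat \<Rightarrow> 'a) \<Rightarrow> nat \<Rightarrow> real" where
  "chain_length \<rho> f n = (\<Sum>i<n. \<rho> (f i) (f (Suc i)))"

definition chain_metric :: "('a \<Rightarrow> 'a \<Rightarrow> real) \<Rightarrow> 'a \<Rightarrow> 'a \<Rightarrow> real" where
  "chain_metric \<rho> x y = Inf {chain_length \<rho> f n | f n. f 0 = x \<and> f n = y}"

lemma chain_length_shift_add:
  "chain_length \<rho> f (n + m) = chain_length \<rho> f n + chain_length \<rho> (\<lambda>i. f (n + i)) m"
  unfolding chain_length_def by (induction m) simp_all

lemma chain_length_append: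
  assumes "f n = g 0"
  shows "chain_length \<rho> (\<lambda>i. if i \<le> n then f i else g (i - n)) (n + m)
       = chain_length \<rho> f n + chain_length \<rho> g m"
proof -
  have "chain_length \<rho> (\<lambda>i. if i \<le> n then f i else g (i - n)) n = chain_length \<rho> f n"
    unfolding chain_length_def by (rule sum.cong) auto
  moreover have "chain_length \<rho> (\<lambda>i. if n + i \<le> n then f (n + i) else g (n + i - n)) m
      = chain_length \<rho> g m"
    unfolding chain_length_def by (rule sum.cong) (use assms in auto)
  ultimately show ?thesis by (simp add: chain_length_shift_add)
qed

lemma chain_length_reverse:
  assumes "\<And>x y. \<rho> x y = \<rho> y x"
  shows "chain_length \<rho> (\<lambda>i. f (n - i)) n = chain_length \<rho> f n"
proof -
  have "chain_length \<rho> (\<lambda>i. f (n - i)) n = (\<Sum>i<n. \<rho> (f (n - Suc i)) (f (Suc (n - Suc i))))"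
    unfolding chain_length_def by (rule sum.cong) (auto simp: assms Suc_diff_Suc)
  also have "\<dots> = chain_length \<rho> f n"
    unfolding chain_length_def by (rule sum.nat_diff_reindex)
  finally show ?thesis .
qed

lemma chain_length_halving:
  assumes nonneg: "\<And>x y. 0 \<le> \<rho> x y" and "0 < n"
  obtains m where "m < n" "chain_length \<rho> f m \<le> chain_length \<rho> f n / 2"
    "chain_length \<rho> (\<lambda>i. f (Suc m + i)) (n - Suc m) \<le> chain_length \<rho> f n / 2"
proof -
  define L where "L = chain_length \<rho> f n"
  define M where "M = {m. m < n \<and> chain_length \<rho> f m \<le> L / 2}"
  have "0 \<le> L" unfolding L_def chain_length_def by (simp add: nonneg sum_nonneg)
  hence "0 \<in> M" using \<open>0 < n\<close> by (simp add: M_def chain_length_def)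
  moreover have "finite M" unfolding M_def by simp
  ultimately have m: "Max M \<in> M" "\<And>k. k \<in> M \<Longrightarrow> k \<le> Max M" by (auto intro: Max_in)
  define m where "m = Max M"
  have "m < n" "chain_length \<rho> f m \<le> L / 2" using m unfolding M_def m_def by auto
  have split: "L = chain_length \<rho> f (Suc m) + chain_length \<rho> (\<lambda>i. f (Suc m + i)) (n - Suc m)"
    using chain_length_shift_add[of \<rho> f "Suc m" "n - Suc m"] \<open>m < n\<close> by (simp add: L_def)
  have "chain_length \<rho> (\<lambda>i. f (Suc m + i)) (n - Suc m) \<le> L / 2"
  proof (cases "Suc m = n")
    case True thus ?thesis using \<open>0 \<le> L\<close> by (simp add: chain_length_def)
  next
    case False
    hence "Suc m \<notin> M" using m(2) \<open>m < n\<close> unfolding m_def by fastforce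
    hence "L / 2 < chain_length \<rho> f (Suc m)" using False \<open>m < n\<close> by (auto simp: M_def)
    thus ?thesis using split by simp
  qed
  with \<open>m < n\<close> \<open>chain_length \<rho> f m \<le> L / 2\<close> show ?thesis using that unfolding L_def by blast
qed

locale four_point_quasimetric =
  fixes \<rho> :: "'a \<Rightarrow> 'a \<Rightarrow> real"
  assumes nonneg: "\<And>x y. 0 \<le> \<rho> x y" and zero: "\<And>x. \<rho> x x = 0"
    and sym: "\<And>x y. \<rho> x y = \<rho> y x" and pos: "\<And>x y. x \<noteq> y \<Longrightarrow> 0 < \<rho> x y"
    and four_point: "\<And>w x y z. \<rho> w z \<le> 2 * max (\<rho> w x) (max (\<rho> x y) (\<rho> y z))"
begin

lemma chain_length_nonneg: "0 \<le> chain_length \<rho> f n"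
  unfolding chain_length_def by (simp add: nonneg sum_nonneg)

text \<open>Frink's lemma: cut the chain at the step where its length crosses one half and apply
  the four-point inequality to the two halves and the crossing step.\<close>

lemma dist_le_chain_length: "\<rho> (f 0) (f n) \<le> 2 * chain_length \<rho> f n"
proof (induction n arbitrary: f rule: less_induct)
  case (less n)
  show ?case
  proof (cases "n = 0")
    case True thus ?thesis by (simp add: zero chain_length_def)
  next
    case False
    define L where "L = chain_length \<rho> f n"
    obtain m where m: "m < n" "chain_length \<rho> f m \<le> L / 2"
      "chain_length \<rho> (\<lambda>i. f (Suc m + i)) (n - Suc m) \<le> L / 2"
      using chain_length_halving[where \<rho>=\<rho> and n=n and f=f] nonneg False
      unfolding L_def by blast
    have head: "\<rho> (f 0) (f m) \<le> L" using less.IH[OF m(1), of f] m(2) by linarith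
    have tail: "\<rho> (f (Suc m)) (f n) \<le> L"
      using less.IH[of "n - Suc m" "\<lambda>i. f (Suc m + i)"] m by simp
    have "\<rho> (f m) (f (Suc m)) \<le> L"
      unfolding L_def chain_length_def by (rule member_le_sum) (use m nonneg in auto)
    with head tail show ?thesis
      using four_point[where w="f 0" and x="f m" and y="f (Suc m)" and z="f n"] unfolding L_def by linarith
  qed
qed

lemma single_step_chain: "chain_length \<rho> (\<lambda>i. if i = 0 then x else y) 1 \<in> {chain_length \<rho> f n | f n. f 0 = x \<and> f n = y}"
  by (rule CollectI, rule exI[of _ "\<lambda>i. if i = 0 then x else y"], rule exI[of _ 1]) simp

lemma chain_lengths_bdd_below: "bdd_below {chain_length \<rho> f n | f n. f 0 = x \<and> f n = y}"
  by (rule bdd_belowI[of _ 0]) (use chain_length_nonneg in auto)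

lemma chain_metric_le_chain_length:
  "f 0 = x \<Longrightarrow> f n = y \<Longrightarrow> chain_metric \<rho> x y \<le> chain_length \<rho> f n"
  unfolding chain_metric_def by (rule cInf_lower[OF _ chain_lengths_bdd_below]) blast

lemma chain_metric_greatest:
  assumes "\<And>f n. f 0 = x \<Longrightarrow> f n = y \<Longrightarrow> c \<le> chain_length \<rho> f n"
  shows "c \<le> chain_metric \<rho> x y"
  unfolding chain_metric_def by (rule cInf_greatest) (use single_step_chain assms in blast)+

lemma chain_metric_le: "chain_metric \<rho> x y \<le> \<rho> x y"
  using chain_metric_le_chain_length[of "\<lambda>i. if i = 0 then x else y" x 1 y]
  by (simp add: chain_length_def)

lemma chain_metric_ge: "\<rho> x y / 2 \<le> chain_metric \<rho> x y"
proof (rule chain_metric_greatest)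
  fix f :: "nat \<Rightarrow> 'a" and n assume "f 0 = x" "f n = y"
  thus "\<rho> x y / 2 \<le> chain_length \<rho> f n" using dist_le_chain_length[of f n] by simp
qed

lemma chain_metric_nonneg: "0 \<le> chain_metric \<rho> x y"
  using chain_metric_ge[of x y] nonneg[of x y] by linarith

lemma chain_metric_self [simp]: "chain_metric \<rho> x x = 0"
  using chain_metric_le[of x x] chain_metric_nonneg[of x x] by (simp add: zero)

lemma chain_metric_pos: "x \<noteq> y \<Longrightarrow> 0 < chain_metric \<rho> x y"
  using chain_metric_ge[of x y] pos[of x y] by linarith

lemma chain_metric_sym: "chain_metric \<rho> x y = chain_metric \<rho> y x"
proof -
  have "chain_metric \<rho> x y \<le> chain_metric \<rho> y x" for x y
  proof (rule chain_metric_greatest)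
    fix f :: "nat \<Rightarrow> 'a" and n assume "f 0 = y" "f n = x"
    thus "chain_metric \<rho> x y \<le> chain_length \<rho> f n"
      using chain_metric_le_chain_length[of "\<lambda>i. f (n - i)" x n y] chain_length_reverse[of \<rho>, OF sym]
      by simp
  qed
  thus ?thesis by (simp add: order_antisym)
qed

lemma chain_metric_triangle: "chain_metric \<rho> x z \<le> chain_metric \<rho> x y + chain_metric \<rho> y z"
proof -
  have "chain_metric \<rho> x z - chain_metric \<rho> y z \<le> chain_metric \<rho> x y"
  proof (rule chain_metric_greatest)
    fix f :: "nat \<Rightarrow> 'a" and n assume f: "f 0 = x" "f n = y"
    have "chain_metric \<rho> x z - chain_length \<rho> f n \<le> chain_metric \<rho> y z"
    proof (rule chain_metric_greatest)
      fix g :: "nat \<Rightarrow> 'a" and m assume g: "g 0 = y" "g m = z"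
      define h where "h i = (if i \<le> n then f i else g (i - n))" for i
      have "h 0 = x" "h (n + m) = z" using f g by (auto simp: h_def)
      thus "chain_metric \<rho> x z - chain_length \<rho> f n \<le> chain_length \<rho> g m"
        using chain_metric_le_chain_length[of h x "n + m" z] chain_length_append[of f n g \<rho> m] f g
        unfolding h_def by simp
    qed
    thus "chain_metric \<rho> x z - chain_metric \<rho> y z \<le> chain_length \<rho> f n" by simp
  qed
  thus ?thesis by simp
qed

lemma is_metric_chain_metric: "is_metric (chain_metric \<rho>)"
  unfolding is_metric_def
  using chain_metric_nonneg chain_metric_pos chain_metric_sym chain_metric_triangle
  by (metis chain_metric_self order_less_irrefl)

end

section \<open>A homeomorphism of the half-line\<close>

lemma homeomorphism_max_powr:
  fixes p :: real
  assumes p: "0 < p" "p \<le> 1"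
  shows "homeomorphism {0..} {0..} (\<lambda>s. max s (s powr p)) (\<lambda>s. min s (s powr (1 / p)))"
proof (rule homeomorphismI)
  have small: "s \<le> s powr p \<and> s powr (1 / p) \<le> s" if "0 \<le> s" "s \<le> 1" for s
  proof (cases "s = 0")
    case False
    hence "s powr 1 \<le> s powr p" "s powr (1 / p) \<le> s powr 1"
      using that p powr_mono'[of p 1 s] powr_mono'[of 1 "1 / p" s] by auto
    thus ?thesis using False that by simp
  qed simp
  have large: "s powr p \<le> s \<and> s \<le> s powr (1 / p)" if "1 \<le> s" for s
    using that p powr_mono[of p 1 s] powr_mono[of 1 "1/p" s] by auto
  show "min (max s (s powr p)) (max s (s powr p) powr (1 / p)) = s" if "s \<in> {0..}" for s
  proof (cases "s \<le> 1")
    case True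
    hence "max s (s powr p) = s powr p" using small[of s] that by (simp add: max_def)
    thus ?thesis using small[of s] True that p by (simp add: powr_powr min_def)
  next
    case False
    hence "max s (s powr p) = s" using large[of s] by simp
    thus ?thesis using large[of s] False by simp
  qed
  show "max (min s (s powr (1 / p))) (min s (s powr (1 / p)) powr p) = s" if "s \<in> {0..}" for s
  proof (cases "s \<le> 1")
    case True
    hence "min s (s powr (1 / p)) = s powr (1 / p)" using small[of s] that by (simp add: min_def)
    thus ?thesis using small[of s] True that p by (simp add: powr_powr max_def)
  next
    case False
    hence "min s (s powr (1 / p)) = s" using large[of s] by simp
    thus ?thesis using large[of s] False by simp
  qed
  show "continuous_on {0..} (\<lambda>s. max s (s powr p))"
    "continuous_on {0..} (\<lambda>s. min s (s powr (1 / p)))"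
    using p by (auto intro!: continuous_on_max continuous_on_min continuous_on_powr'
      continuous_on_const continuous_on_id)
qed (auto simp: le_max_iff_disj)

lemma homeomorphism_scaled_powr:
  fixes A \<beta> :: real
  assumes "0 < A" "0 < \<beta>"
  shows "homeomorphism {0..} {0..} (\<lambda>t. A * t powr \<beta>) (\<lambda>s. (s / A) powr (1 / \<beta>))"
proof (rule homeomorphismI)
  show "(A * t powr \<beta> / A) powr (1 / \<beta>) = t" if "t \<in> {0..}" for t
    using assms that by (simp add: powr_powr)
  show "A * ((s / A) powr (1 / \<beta>)) powr \<beta> = s" if "s \<in> {0..}" for s
    using assms that by (simp add: powr_powr)
  show "continuous_on {0..} (\<lambda>t. A * t powr \<beta>)" "continuous_on {0..} (\<lambda>s. (s / A) powr (1 / \<beta>))"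
    using assms by (auto intro!: continuous_on_mult continuous_on_const continuous_on_powr'
      continuous_on_divide continuous_on_id)
qed (use assms in auto)

section \<open>Energy and effective resistance\<close>

lemma gmeas_mono: "A \<subseteq> B \<Longrightarrow> gmeas E mu A \<le> gmeas E mu B"
  unfolding gmeas_def by (rule infsum_mono_set_ennreal)

locale conductance_graph =
  fixes E :: "'a \<Rightarrow> 'a \<Rightarrow> bool" and mu :: "'a \<Rightarrow> 'a \<Rightarrow> real"
  assumes nontrivial: "\<exists>a b :: 'a. a \<noteq> b"
    and simple: "simple_graph E" and connected: "connected_graph E"
    and bounded: "bounded_degree E" and conductance: "conductance E mu"
begin

abbreviation "mass \<equiv> vmeas E mu"
abbreviation "R \<equiv> eff_res E mu"

lemma E_sym: "E x y \<Longrightarrow> E y x"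
  using simple unfolding simple_graph_def by blast

lemma E_irrefl: "\<not> E x x"
  using simple unfolding simple_graph_def by blast

lemma finite_neighbours: "finite {y. E x y}"
  using bounded unfolding bounded_degree_def by blast

lemma mu_pos: "E x y \<Longrightarrow> 0 < mu x y"
  using conductance unfolding conductance_def by blast

lemma mu_sym: "E x y \<Longrightarrow> mu x y = mu y x"
  using conductance unfolding conductance_def by blast

lemma exists_neighbour: "\<exists>y. E x y"
proof -
  obtain y where "y \<noteq> x" using nontrivial by (metis (full_types))
  moreover have "E\<^sup>*\<^sup>* x y" using connected unfolding connected_graph_def by blast
  ultimately show ?thesis by (metis converse_rtranclpE)
qed

lemma mass_pos: "0 < mass x"
proof -
  obtain y where "E x y" using exists_neighbour by blast
  thus ?thesis unfolding vmeas_def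
    by (intro sum_pos2[of _ y]) (use finite_neighbours mu_pos in \<open>auto intro: less_imp_le\<close>)
qed

lemma mu_le_mass: "E x y \<Longrightarrow> mu x y \<le> mass x"
  unfolding vmeas_def
  by (rule member_le_sum) (use finite_neighbours mu_pos in \<open>auto intro: less_imp_le\<close>)

lemma gmeas_finite: "finite A \<Longrightarrow> gmeas E mu A = ennreal (\<Sum>w\<in>A. mass w)"
  unfolding gmeas_def by (simp add: less_imp_le[OF mass_pos])

lemma energy_affine: "energy E mu (\<lambda>u. c * f u + k) = ennreal (c\<^sup>2) * energy E mu f"
proof -
  let ?g = "\<lambda>(u, v). ennreal ((f u - f v)\<^sup>2 * mu u v)"
  have "energy E mu (\<lambda>u. c * f u + k) = (\<Sum>\<^sub>\<infinity>p\<in>{(u, v). E u v}. ennreal (c\<^sup>2) * ?g p) / 2"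
    unfolding energy_def
    by (rule arg_cong[where f = "\<lambda>t. t / 2"], rule infsum_cong)
       (auto simp: ennreal_mult'[symmetric] algebra_simps power2_eq_square split: prod.splits)
  also have "\<dots> = ennreal (c\<^sup>2) * energy E mu f"
    unfolding energy_def infsum_cmult_ennreal by (simp add: divide_ennreal_def mult.assoc)
  finally show ?thesis .
qed

lemma energy_ge_edge: "E u v \<Longrightarrow> ennreal ((f u - f v)\<^sup>2 * mu u v) / 2 \<le> energy E mu f"
  unfolding energy_def
  by (rule divide_right_mono_ennreal,
      rule infsum_ge_member_ennreal[where f = "\<lambda>(u, v). ennreal ((f u - f v)\<^sup>2 * mu u v)"
        and a = "(u, v)", simplified])
     auto

lemma edge_difference_le_energy:
  assumes "E u v" "energy E mu f \<noteq> \<infinity>"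
  shows "(f u - f v)\<^sup>2 * mu u v \<le> 2 * enn2real (energy E mu f)"
proof -
  have "ennreal ((f u - f v)\<^sup>2 * mu u v / 2) \<le> ennreal (enn2real (energy E mu f))"
    using energy_ge_edge[OF assms(1), of f] mu_pos[OF assms(1)] assms(2)
    by (simp add: divide_ennreal[symmetric] ennreal_enn2real_if)
  thus ?thesis by simp
qed

text \<open>Only the two star sums around \<open>x\<close> contribute, each equal to \<open>mass x\<close>; the factor
  \<open>1/2\<close> in the energy compensates for counting every edge in both orientations.\<close>

lemma energy_indicator: "energy E mu (\<lambda>w. if w = x then 1 else 0) = ennreal (mass x)"
proof -
  define f :: "'a \<Rightarrow> real" where "f = (\<lambda>w. if w = x then 1 else 0)"
  define N where "N = {y. E x y}"
  define t where "t = (\<lambda>(u, v). ennreal ((f u - f v)\<^sup>2 * mu u v))"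
  define out where "out = Pair x ` N"
  define into where "into = (\<lambda>u. (u, x)) ` N"
  have "finite N" "x \<notin> N" using finite_neighbours E_irrefl by (auto simp: N_def)
  have "infsum t {(u, v). E u v} = infsum t (out \<union> into)"
  proof (rule infsum_cong_neutral)
    fix p assume "p \<in> {(u, v). E u v} - (out \<union> into)"
    then obtain u v where p: "p = (u, v)" "E u v" "p \<notin> out" "p \<notin> into" by auto
    have "u \<noteq> x" using p by (auto simp: out_def N_def)
    moreover have "v \<noteq> x" using p E_sym by (auto simp: into_def N_def)
    ultimately show "t p = 0" using p by (simp add: t_def f_def)
  qed (use E_sym in \<open>auto simp: out_def into_def N_def\<close>)
  also have "\<dots> = sum t out + sum t into"
    using \<open>finite N\<close> \<open>x \<notin> N\<close>
    by (subst infsum_finite) (auto simp: out_def into_def intro!: sum.union_disjoint)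
  also have "sum t out = (\<Sum>v\<in>N. ennreal (mu x v))"
    unfolding out_def using \<open>x \<notin> N\<close>
    by (subst sum.reindex) (auto simp: inj_on_def t_def f_def intro!: sum.cong)
  also have "sum t into = (\<Sum>v\<in>N. ennreal (mu x v))"
    unfolding into_def using \<open>x \<notin> N\<close>
    by (subst sum.reindex) (auto simp: inj_on_def t_def f_def N_def mu_sym E_sym intro!: sum.cong)
  also have "(\<Sum>v\<in>N. ennreal (mu x v)) = ennreal (mass x)"
    unfolding vmeas_def N_def by (rule sum_ennreal) (use mu_pos in \<open>auto intro: less_imp_le\<close>)
  also have "ennreal (mass x) + ennreal (mass x) = ennreal (2 * mass x)"
    using mass_pos[of x] by (simp add: ennreal_plus[symmetric] del: ennreal_plus)
  finally have "infsum t {(u, v). E u v} / 2 = ennreal (2 * mass x) / ennreal 2" by simp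
  also have "\<dots> = ennreal (mass x)" using mass_pos[of x] by (subst divide_ennreal) auto
  finally show ?thesis unfolding energy_def f_def[symmetric] t_def[symmetric] .
qed

lemma difference_le_energy:
  "\<exists>c>0. \<forall>f. energy E mu f \<noteq> \<infinity> \<longrightarrow> c * (f x - f y)\<^sup>2 \<le> enn2real (energy E mu f)"
proof -
  have "E\<^sup>*\<^sup>* x y" using connected unfolding connected_graph_def by blast
  thus ?thesis
  proof (induction rule: rtranclp_induct)
    case base
    show ?case by (intro exI[of _ 1]) simp
  next
    case (step y z)
    then obtain c where c: "0 < c"
      "\<And>f. energy E mu f \<noteq> \<infinity> \<Longrightarrow> c * (f x - f y)\<^sup>2 \<le> enn2real (energy E mu f)"
      by blast
    have m: "0 < mu y z" using mu_pos[OF step(2)] .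
    define c' where "c' = 1 / (2 / c + 4 / mu y z)"
    have "c' * (f x - f z)\<^sup>2 \<le> enn2real (energy E mu f)" if "energy E mu f \<noteq> \<infinity>" for f
    proof -
      define e where "e = enn2real (energy E mu f)"
      have "(f x - f y)\<^sup>2 \<le> e / c"
        using c(2)[OF that] c(1) by (simp add: e_def field_simps)
      moreover have "(f y - f z)\<^sup>2 \<le> 2 * e / mu y z"
        using edge_difference_le_energy[OF step(2) that] m by (simp add: e_def field_simps)
      moreover have "e * (2 / c + 4 / mu y z) = 2 * (e / c) + 2 * (2 * e / mu y z)"
        by (simp add: field_simps)
      ultimately have "(f x - f z)\<^sup>2 \<le> e * (2 / c + 4 / mu y z)"
        using square_add_le[of "f x - f y" "f y - f z"] by simp
      thus ?thesis using c(1) m by (simp add: c'_def e_def field_simps)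
    qed
    moreover have "0 < c'" using c(1) m by (simp add: c'_def add_pos_pos)
    ultimately show ?case by blast
  qed
qed

definition min_energy :: "'a \<Rightarrow> 'a \<Rightarrow> ennreal" where
  "min_energy x y = (INF f\<in>{f. f x = 1 \<and> f y = 0}. energy E mu f)"

lemma R_eq: "R x y = enn2real (inverse (min_energy x y))"
  unfolding eff_res_def min_energy_def ..

lemma min_energy_le: "f x = 1 \<Longrightarrow> f y = 0 \<Longrightarrow> min_energy x y \<le> energy E mu f"
  unfolding min_energy_def by (rule INF_lower) simp

lemma min_energy_pos:
  assumes "x \<noteq> y"
  shows "0 < min_energy x y"
proof -
  obtain c where c: "0 < c"
    "\<And>f. energy E mu f \<noteq> \<infinity> \<Longrightarrow> c * (f x - f y)\<^sup>2 \<le> enn2real (energy E mu f)"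
    using difference_le_energy[of x y] by blast
  have "ennreal c \<le> min_energy x y" unfolding min_energy_def
  proof (rule INF_greatest)
    fix f :: "'a \<Rightarrow> real" assume "f \<in> {f. f x = 1 \<and> f y = 0}"
    thus "ennreal c \<le> energy E mu f"
      using c(2)[of f] by (cases "energy E mu f = \<infinity>") (auto intro: ennreal_le_if_le_enn2real)
  qed
  thus ?thesis using order_less_le_trans[of 0 "ennreal c" "min_energy x y"] c(1) by simp
qed

lemma min_energy_le_mass: "x \<noteq> y \<Longrightarrow> min_energy x y \<le> ennreal (mass x)"
  using min_energy_le[of "\<lambda>w. if w = x then 1 else 0" x y] energy_indicator by simp

lemma min_energy_ge_edge:
  assumes "E x y"
  shows "ennreal (mu x y / 2) \<le> min_energy x y"
  unfolding min_energy_def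
proof (rule INF_greatest)
  fix f :: "'a \<Rightarrow> real" assume "f \<in> {f. f x = 1 \<and> f y = 0}"
  thus "ennreal (mu x y / 2) \<le> energy E mu f"
    using energy_ge_edge[OF assms, of f] mu_pos[OF assms] by (simp add: divide_ennreal[symmetric])
qed

lemma min_energy_real:
  assumes "x \<noteq> y"
  obtains e where "min_energy x y = ennreal e" "0 < e" "e \<le> mass x" "R x y = 1 / e"
proof
  have finite: "min_energy x y < \<infinity>"
    using min_energy_le_mass[OF assms] by (simp add: le_less_trans)
  show eq: "min_energy x y = ennreal (enn2real (min_energy x y))"
    using finite by simp
  show pos: "0 < enn2real (min_energy x y)"
    using finite min_energy_pos[OF assms] by (simp add: enn2real_positive_iff)
  show "enn2real (min_energy x y) \<le> mass x"
    using min_energy_le_mass[OF assms] mass_pos[of x] eq by (metis ennreal_le_iff less_imp_le)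
  show "R x y = 1 / enn2real (min_energy x y)"
    unfolding R_eq by (subst eq) (use pos in \<open>simp add: inverse_ennreal divide_inverse\<close>)
qed

lemma R_self [simp]: "R x x = 0"
proof -
  have "{f :: 'a \<Rightarrow> real. f x = 1 \<and> f x = 0} = {}" by auto
  thus ?thesis by (simp only: R_eq min_energy_def) simp
qed

lemma R_nonneg: "0 \<le> R x y"
  unfolding R_eq by simp

lemma R_ge_inverse_mass: "x \<noteq> y \<Longrightarrow> 1 / mass x \<le> R x y"
  by (erule min_energy_real) (use mass_pos in \<open>simp add: frac_le\<close>)

lemma R_pos: "x \<noteq> y \<Longrightarrow> 0 < R x y"
  using R_ge_inverse_mass[of x y] mass_pos[of x] by (smt (verit) divide_pos_pos)

lemma R_edge_le: 
  assumes "E x y"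
  shows "R x y \<le> 2 / mu x y"
proof -
  have "x \<noteq> y" using assms E_irrefl by auto
  then obtain e where e: "min_energy x y = ennreal e" "0 < e" "R x y = 1 / e"
    by (rule min_energy_real)
  have "mu x y / 2 \<le> e" using min_energy_ge_edge[OF assms] e by simp
  hence "1 / e \<le> 2 / mu x y" using e mu_pos[OF assms] by (simp add: field_simps)
  thus ?thesis using e by simp
qed

lemma difference_le_R_energy:
  assumes "energy E mu f \<noteq> \<infinity>"
  shows "(f x - f y)\<^sup>2 \<le> R x y * enn2real (energy E mu f)"
proof (cases "f x = f y")
  case True thus ?thesis using R_nonneg[of x y] by simp
next
  case False
  then obtain e where e: "min_energy x y = ennreal e" "0 < e" "R x y = 1 / e"
    by (metis min_energy_real)
  define c where "c = 1 / (f x - f y)"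
  have "c * (f x - f y) = 1" using False by (simp add: c_def)
  hence "min_energy x y \<le> energy E mu (\<lambda>u. c * f u + (- c * f y))"
    by (intro min_energy_le) (simp_all add: algebra_simps)
  also have "\<dots> = ennreal (c\<^sup>2) * energy E mu f"
    by (rule energy_affine)
  also have "\<dots> = ennreal (c\<^sup>2 * enn2real (energy E mu f))"
    using assms by (simp add: ennreal_mult' ennreal_enn2real_if)
  finally have "e \<le> enn2real (energy E mu f) / (f x - f y)\<^sup>2"
    using e by (simp add: c_def power_divide)
  thus ?thesis unfolding e(3) using e(2) False by (simp add: field_simps)
qed

lemma R_sym: "R x y = R y x"
proof -
  have "min_energy x y \<le> min_energy y x" for x y
    unfolding min_energy_def[of y x]
  proof (rule INF_greatest)
    fix f :: "'a \<Rightarrow> real" assume "f \<in> {f. f y = 1 \<and> f x = 0}"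
    thus "min_energy x y \<le> energy E mu f"
      using min_energy_le[of "\<lambda>u. (- 1) * f u + 1" x y] energy_affine[of "- 1" f 1] by simp
  qed
  hence "min_energy x y = min_energy y x" by (metis order_antisym)
  thus ?thesis unfolding R_eq by simp
qed

lemma R_quasi_triangle: "R x z \<le> 2 * (R x y + R y z)"
proof (cases "x = z")
  case True thus ?thesis using R_nonneg[of x y] R_nonneg[of y z] by simp
next
  case False
  define S where "S = R x y + R y z"
  have "0 < S"
    using False R_pos[of x y] R_pos[of y z] R_nonneg[of x y] R_nonneg[of y z]
    unfolding S_def by (cases "x = y") auto
  obtain e where e: "min_energy x z = ennreal e" "0 < e" "R x z = 1 / e"
    using False by (rule min_energy_real)
  have "ennreal (1 / (2 * S)) \<le> min_energy x z" unfolding min_energy_def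
  proof (rule INF_greatest)
    fix f :: "'a \<Rightarrow> real" assume f: "f \<in> {f. f x = 1 \<and> f z = 0}"
    show "ennreal (1 / (2 * S)) \<le> energy E mu f"
    proof (cases "energy E mu f = \<infinity>")
      case False
      define w where "w = enn2real (energy E mu f)"
      have "1 = (f x - f z)\<^sup>2" using f by simp
      also have "\<dots> \<le> 2 * (f x - f y)\<^sup>2 + 2 * (f y - f z)\<^sup>2"
        using square_add_le[of "f x - f y" "f y - f z"] by simp
      also have "\<dots> \<le> 2 * (R x y * w) + 2 * (R y z * w)"
        using difference_le_R_energy[OF False, of x y] difference_le_R_energy[OF False, of y z]
        unfolding w_def by simp
      also have "\<dots> = 2 * S * w" unfolding S_def by (simp add: algebra_simps)
      finally have "1 / (2 * S) \<le> w" using \<open>0 < S\<close> by (simp add: field_simps)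
      thus ?thesis unfolding w_def by (rule ennreal_le_if_le_enn2real)
    qed simp
  qed
  hence "1 / (2 * S) \<le> e" using e by simp
  hence "1 / e \<le> 2 * S" using e \<open>0 < S\<close> by (simp add: field_simps)
  thus ?thesis using e unfolding S_def by simp
qed

end

section \<open>Volume of resistance balls\<close>

locale resistance_doubling_graph = conductance_graph +
  assumes p0: "p0_cond E mu"
    and doubling: "volume_doubling E mu (eff_res E mu)"
    and unbounded: "\<forall>M. \<exists>x y. eff_res E mu x y > M"
    and finite_volume: "\<forall>x r. r > 0 \<longrightarrow> gvol E mu (eff_res E mu) x r < \<infinity>"
begin

definition C\<^sub>D :: real where
  "C\<^sub>D = max 2 (SOME C. \<forall>x r. r > 0 \<longrightarrow> gvol E mu R x (2 * r) \<le> ennreal C * gvol E mu R x r)"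

definition \<gamma> :: real where
  "\<gamma> = log 2 C\<^sub>D"

definition V :: "'a \<Rightarrow> real \<Rightarrow> real" where
  "V x r = enn2real (gvol E mu R x r)"

lemma C\<^sub>D_ge: "2 \<le> C\<^sub>D"
  unfolding C\<^sub>D_def by simp

lemma \<gamma>_ge: "1 \<le> \<gamma>"
  unfolding \<gamma>_def using C\<^sub>D_ge by simp

lemma gvol_doubling: "0 < r \<Longrightarrow> gvol E mu R x (2 * r) \<le> ennreal C\<^sub>D * gvol E mu R x r"
proof -
  assume "0 < r"
  have "\<forall>x r. r > 0 \<longrightarrow> gvol E mu R x (2 * r)
      \<le> ennreal (SOME C. \<forall>x r. r > 0 \<longrightarrow> gvol E mu R x (2 * r) \<le> ennreal C * gvol E mu R x r)
        * gvol E mu R x r"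
    by (rule someI_ex) (use doubling in \<open>simp add: volume_doubling_def\<close>)
  hence "gvol E mu R x (2 * r) \<le> ennreal (SOME C. \<forall>x r. r > 0 \<longrightarrow>
      gvol E mu R x (2 * r) \<le> ennreal C * gvol E mu R x r) * gvol E mu R x r"
    using \<open>0 < r\<close> by blast
  also have "\<dots> \<le> ennreal C\<^sub>D * gvol E mu R x r"
    unfolding C\<^sub>D_def by (intro mult_right_mono ennreal_leI) auto
  finally show ?thesis .
qed

lemma gvol_R_eq: "0 < r \<Longrightarrow> gvol E mu R x r = ennreal (V x r)"
  unfolding V_def using finite_volume by (simp add: less_top[symmetric] ennreal_enn2real_if)

lemma V_nonneg: "0 \<le> V x r"
  unfolding V_def by simp

lemma V_mono:
  assumes "0 < r" "r \<le> s"
  shows "V x r \<le> V x s"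
proof -
  have "gvol E mu R x r \<le> gvol E mu R x s"
    unfolding gvol_def by (rule gmeas_mono) (use assms in \<open>auto simp: gball_def\<close>)
  thus ?thesis using gvol_R_eq[of r x] gvol_R_eq[of s x] assms V_nonneg[of x s] by simp
qed

lemma mass_le_V:
  assumes "0 < r"
  shows "mass x \<le> V x r"
proof -
  have "gmeas E mu {x} \<le> gvol E mu R x r"
    unfolding gvol_def by (rule gmeas_mono) (use assms in \<open>auto simp: gball_def\<close>)
  thus ?thesis using gvol_R_eq[OF assms, of x] gmeas_finite[of "{x}"] V_nonneg[of x r] by simp
qed

lemma V_pos: "0 < r \<Longrightarrow> 0 < V x r"
  using mass_le_V[of r x] mass_pos[of x] by linarith

lemma V_doubling:
  assumes "0 < r"
  shows "V x (2 * r) \<le> C\<^sub>D * V x r"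
  using gvol_doubling[OF assms, of x] gvol_R_eq[OF assms, of x] gvol_R_eq[of "2 * r" x] assms
    C\<^sub>D_ge V_nonneg[of x r]
  by (simp add: ennreal_mult'[symmetric])

lemma V_quadrupling:
  assumes "0 < r"
  shows "V x (4 * r) \<le> C\<^sub>D\<^sup>2 * V x r"
proof -
  have "V x (2 * (2 * r)) \<le> C\<^sub>D * V x (2 * r)" using V_doubling[of "2 * r" x] assms by simp
  also have "\<dots> \<le> C\<^sub>D * (C\<^sub>D * V x r)"
    using V_doubling[OF assms, of x] C\<^sub>D_ge by (intro mult_left_mono) auto
  finally show ?thesis by (simp add: power2_eq_square mult.assoc)
qed

lemma V_polynomial_growth:
  assumes "0 < s" "s \<le> \<sigma>"
  shows "V x \<sigma> \<le> C\<^sub>D * (\<sigma> / s) powr \<gamma> * V x s"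
  unfolding \<gamma>_def
  by (rule doubling_imp_polynomial_growth[where g = "V x"])
     (use assms V_mono V_doubling C\<^sub>D_ge V_nonneg in auto)

lemma gball_R_subset:
  assumes "R x y \<le> r"
  shows "gball R y r \<subseteq> gball R x (4 * r)"
proof
  fix w assume "w \<in> gball R y r"
  thus "w \<in> gball R x (4 * r)"
    using R_quasi_triangle[of x w y] assms by (simp add: gball_def)
qed

lemma V_recentre:
  assumes "R x y \<le> r" "0 < r"
  shows "V y r \<le> V x (4 * r)"
proof -
  have "gvol E mu R y r \<le> gvol E mu R x (4 * r)"
    unfolding gvol_def by (rule gmeas_mono, rule gball_R_subset[OF assms(1)])
  thus ?thesis using gvol_R_eq[of r y] gvol_R_eq[of "4 * r" x] assms V_nonneg[of x "4 * r"] by simp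
qed

lemma gball_R_inverse_mass: "gball R x (1 / mass x) = {x}"
  using R_ge_inverse_mass[of x] mass_pos[of x] by (fastforce simp: gball_def not_less)

lemma V_inverse_mass: "V x (1 / mass x) = mass x"
  unfolding V_def gvol_def gball_R_inverse_mass using gmeas_finite[of "{x}"] mass_pos[of x] by simp

lemma exists_far_vertex: "\<exists>w. M < R x w"
proof -
  obtain y z where "4 * max M 0 < R y z" using unbounded by blast
  moreover have "R y z \<le> 2 * (R x y + R x z)" using R_quasi_triangle[of y z x] R_sym[of y x] by simp
  ultimately have "M < R x z" if "R x y \<le> M"
    using that max.cobounded1[of M 0] max.cobounded2[of 0 M] by argo
  thus ?thesis by (metis not_le)
qed

text \<open>Doubling from the singleton ball of radius \<open>1 / mass y\<close> bounds \<open>mass y\<close> from below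
  uniformly on a resistance ball; together with finite volume this forces the ball to be finite.\<close>

lemma mass_lower_bound:
  assumes "0 < r" "R x y < r"
  shows "min (V x r) ((V x r / (C\<^sub>D * (4 * r) powr \<gamma>)) powr (1 / (1 + \<gamma>))) \<le> mass y"
proof -
  have V: "V x r \<le> V y (4 * r)" using V_recentre[of y x r] assms R_sym[of x y] by simp
  show ?thesis
  proof (cases "4 * r \<le> 1 / mass y")
    case True
    hence "V y (4 * r) \<le> V y (1 / mass y)" using assms by (intro V_mono) auto
    thus ?thesis using V V_inverse_mass[of y] by simp
  next
    case False
    have "V y (4 * r) \<le> C\<^sub>D * ((4 * r) / (1 / mass y)) powr \<gamma> * V y (1 / mass y)"
      using False mass_pos[of y] by (intro V_polynomial_growth) auto
    also have "\<dots> = C\<^sub>D * (4 * r) powr \<gamma> * mass y powr (1 + \<gamma>)"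
      using mass_pos[of y] assms by (simp add: V_inverse_mass powr_mult powr_add)
    finally have "V x r / (C\<^sub>D * (4 * r) powr \<gamma>) \<le> mass y powr (1 + \<gamma>)"
      using V C\<^sub>D_ge assms by (simp add: field_simps)
    hence "(V x r / (C\<^sub>D * (4 * r) powr \<gamma>)) powr (1 / (1 + \<gamma>))
        \<le> (mass y powr (1 + \<gamma>)) powr (1 / (1 + \<gamma>))"
      using \<gamma>_ge V_nonneg[of x r] C\<^sub>D_ge by (intro powr_mono2) auto
    also have "\<dots> = mass y" using mass_pos[of y] \<gamma>_ge by (simp add: powr_powr)
    finally show ?thesis by simp
  qed
qed

lemma finite_gball_R:
  assumes "0 < r"
  shows "finite (gball R x r)"
proof (rule ccontr)
  assume "infinite (gball R x r)"
  define m where "m = min (V x r) ((V x r / (C\<^sub>D * (4 * r) powr \<gamma>)) powr (1 / (1 + \<gamma>)))"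
  have "0 < m" unfolding m_def using V_pos[OF assms, of x] C\<^sub>D_ge assms by simp
  have "gmeas E mu (gball R x r) = \<infinity>" unfolding gmeas_def
    by (rule infsum_superconst_infinite_ennreal[where b = "ennreal m"])
       (use \<open>infinite (gball R x r)\<close> \<open>0 < m\<close> mass_lower_bound[OF assms]
        in \<open>auto simp: gball_def m_def intro!: ennreal_leI\<close>)
  thus False using finite_volume assms unfolding gvol_def by (metis order_less_irrefl)
qed

definition vol :: "'a set \<Rightarrow> real" where
  "vol A = (\<Sum>w\<in>A. mass w)"

lemma vol_nonneg: "0 \<le> vol A"
  unfolding vol_def by (rule sum_nonneg) (auto intro: less_imp_le mass_pos)

lemma vol_mono: "finite B \<Longrightarrow> A \<subseteq> B \<Longrightarrow> vol A \<le> vol B"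
  unfolding vol_def by (rule sum_mono2) (auto intro: less_imp_le mass_pos)

lemma V_eq_vol: "0 < r \<Longrightarrow> V x r = vol (gball R x r)"
  unfolding V_def gvol_def vol_def using gmeas_finite[OF finite_gball_R] mass_pos
  by (simp add: sum_nonneg less_imp_le)

section \<open>A symmetric distortion of the resistance and its snowflake\<close>


definition h :: "'a \<Rightarrow> real \<Rightarrow> real" where
  "h x \<sigma> = \<sigma> * V x \<sigma>"

definition D :: "'a \<Rightarrow> 'a \<Rightarrow> real" where
  "D x y = R x y * (V x (R x y) + V y (R x y))"

definition K\<^sub>1 :: real where
  "K\<^sub>1 = 1 + C\<^sub>D\<^sup>2"

definition K :: real where
  "K = 4 * K\<^sub>1 * C\<^sub>D\<^sup>2"

definition \<beta> :: real where
  "\<beta> = 2 * log 2 K"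

definition \<rho> :: "'a \<Rightarrow> 'a \<Rightarrow> real" where
  "\<rho> x y = D x y powr (1 / \<beta>)"

lemma K\<^sub>1_ge: "5 \<le> K\<^sub>1"
  unfolding K\<^sub>1_def using power_mono[OF C\<^sub>D_ge, of 2] by simp

lemma K_ge: "80 \<le> K"
proof -
  have "4 * 5 * 4 \<le> 4 * K\<^sub>1 * C\<^sub>D\<^sup>2"
    using K\<^sub>1_ge power_mono[OF C\<^sub>D_ge, of 2] by (intro mult_mono) auto
  thus ?thesis unfolding K_def by simp
qed

lemma \<beta>_ge: "2 \<le> \<beta>"
  unfolding \<beta>_def using K_ge by simp

lemma h_nonneg: "0 \<le> \<sigma> \<Longrightarrow> 0 \<le> h x \<sigma>"
  unfolding h_def using V_nonneg by simp

lemma h_mono: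
  assumes "0 \<le> a" "a \<le> b"
  shows "h x a \<le> h x b"
proof (cases "a = 0")
  case True thus ?thesis using h_nonneg assms by (simp add: h_def)
next
  case False
  thus ?thesis unfolding h_def using assms V_mono[of a b x] V_nonneg[of x a]
    by (intro mult_mono) auto
qed

lemma h_doubling: "0 < \<sigma> \<Longrightarrow> h x (2 * \<sigma>) \<le> 2 * C\<^sub>D * h x \<sigma>"
  unfolding h_def using V_doubling[of \<sigma> x] by (simp add: mult_left_mono ac_simps)

lemma h_scale_le:
  assumes "0 < \<sigma>" "0 < t" "t \<le> 1"
  shows "h x (t * \<sigma>) \<le> t * h x \<sigma>"
  unfolding h_def using V_mono[of "t * \<sigma>" \<sigma> x] assms
  by (simp add: mult.assoc mult_left_mono mult_le_cancel_right1)

lemma h_scale_ge: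
  assumes "0 < \<sigma>" "1 \<le> t"
  shows "t * h x \<sigma> \<le> h x (t * \<sigma>)"
  unfolding h_def using V_mono[of \<sigma> "t * \<sigma>" x] assms
  by (simp add: mult.assoc mult_left_mono)

lemma D_sym: "D x y = D y x"
  unfolding D_def using R_sym[of x y] by (simp add: add.commute)

lemma D_nonneg: "0 \<le> D x y"
  unfolding D_def using R_nonneg V_nonneg by simp

lemma D_self [simp]: "D x x = 0"
  unfolding D_def by simp

lemma h_le_D: "h x (R x y) \<le> D x y"
  unfolding D_def h_def using R_nonneg[of x y] V_nonneg[of y "R x y"] by (simp add: distrib_left)

lemma D_le_h: "D x y \<le> K\<^sub>1 * h x (R x y)"
proof (cases "x = y")
  case False
  hence r: "0 < R x y" by (rule R_pos)
  have "V y (R x y) \<le> V x (4 * R x y)" using V_recentre[of x y "R x y"] r by simp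
  also have "\<dots> \<le> C\<^sub>D\<^sup>2 * V x (R x y)" using V_quadrupling[OF r] .
  finally have "V x (R x y) + V y (R x y) \<le> K\<^sub>1 * V x (R x y)"
    unfolding K\<^sub>1_def by (simp add: algebra_simps)
  thus ?thesis unfolding D_def h_def using r by (simp add: mult_left_mono)
qed (simp add: h_def)

lemma mass_R_le_D:
  assumes "x \<noteq> y"
  shows "R x y * mass x \<le> D x y"
  using mass_le_V[OF R_pos[OF assms], of x] R_nonneg[of x y] h_le_D[of x y, unfolded h_def]
  by (meson mult_left_mono order_trans)

lemma one_le_D: 
  assumes "x \<noteq> y"
  shows "1 \<le> D x y"
proof -
  have "1 \<le> R x y * mass x"
    using R_ge_inverse_mass[OF assms] mass_pos[of x] by (simp add: divide_le_eq)
  thus ?thesis using mass_R_le_D[OF assms] by linarith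
qed

lemma D_le_K_D:
  assumes "R y z \<le> R x y"
  shows "D x z \<le> K * D x y"
proof (cases "x = y")
  case True
  hence "y = z" using assms R_pos by (metis R_self not_le)
  thus ?thesis using True K_ge by simp
next
  case False
  define a where "a = R x y"
  have a: "0 < a" using R_pos[OF False] a_def by simp
  have xz: "R x z \<le> 4 * a" using R_quasi_triangle[of x z y] assms a_def by simp
  have "D x z \<le> K\<^sub>1 * h x (R x z)" by (rule D_le_h)
  also have "\<dots> \<le> K\<^sub>1 * h x (4 * a)"
    using K\<^sub>1_ge xz R_nonneg[of x z] by (intro mult_left_mono h_mono) auto
  also have "\<dots> = K\<^sub>1 * 4 * a * V x (4 * a)" by (simp add: h_def)
  also have "\<dots> \<le> K\<^sub>1 * 4 * a * (C\<^sub>D\<^sup>2 * V x a)"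
    using K\<^sub>1_ge a V_quadrupling[OF a, of x] by (intro mult_left_mono) auto
  also have "\<dots> = K * h x a" by (simp add: K_def h_def)
  also have "\<dots> \<le> K * D x y" unfolding a_def using K_ge h_le_D by (intro mult_left_mono) auto
  finally show ?thesis .
qed

lemma D_quasi_ultrametric: "D x z \<le> K * max (D x y) (D y z)"
proof (cases "R y z \<le> R x y")
  case True
  hence "D x z \<le> K * D x y" by (rule D_le_K_D)
  also have "\<dots> \<le> K * max (D x y) (D y z)" using K_ge by (intro mult_left_mono) auto
  finally show ?thesis .
next
  case False
  hence "D z x \<le> K * D z y" using R_sym[of x y] R_sym[of y z] by (intro D_le_K_D) simp
  also have "\<dots> \<le> K * max (D x y) (D y z)" using K_ge D_sym[of z y] by (intro mult_left_mono) auto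
  finally show ?thesis by (simp add: D_sym)
qed

lemma D_four_point: "D w z \<le> K\<^sup>2 * max (D w x) (max (D x y) (D y z))"
proof -
  define M where "M = max (D w x) (max (D x y) (D y z))"
  have "0 \<le> M" using D_nonneg[of w x] by (simp add: M_def le_max_iff_disj)
  hence "M \<le> K * M" using mult_right_mono[of 1 K M] K_ge by simp
  moreover have "K * max (D x y) (D y z) \<le> K * M"
    using K_ge by (intro mult_left_mono) (auto simp: M_def)
  ultimately have inner: "max (D w x) (K * max (D x y) (D y z)) \<le> K * M"
    by (simp add: M_def)
  have "D w z \<le> K * max (D w x) (D x z)" by (rule D_quasi_ultrametric)
  also have "\<dots> \<le> K * max (D w x) (K * max (D x y) (D y z))"
    using K_ge by (intro mult_left_mono max.mono D_quasi_ultrametric) auto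
  also have "\<dots> \<le> K * (K * M)"
    using inner K_ge by (intro mult_left_mono) auto
  finally show ?thesis by (simp add: M_def power2_eq_square mult.assoc)
qed

text \<open>This choice of \<open>\<beta>\<close> turns the four-point inequality for \<open>D\<close> into the one of
  Frink's lemma.\<close>

lemma K_square_powr: "(K\<^sup>2) powr (1 / \<beta>) = 2"
proof -
  have "K\<^sup>2 = K powr 2" using K_ge by simp
  hence "(K\<^sup>2) powr (1 / \<beta>) = K powr (2 * (1 / \<beta>))" by (simp only: powr_powr)
  also have "2 * (1 / \<beta>) = ln 2 / ln K" unfolding \<beta>_def log_def using K_ge by simp
  also have "K powr (ln 2 / ln K) = exp (ln 2 / ln K * ln K)" using K_ge by (simp add: powr_def)
  also have "\<dots> = 2" using K_ge by simp
  finally show ?thesis .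
qed

lemma four_point_quasimetric_\<rho>: "four_point_quasimetric \<rho>"
proof
  show "0 \<le> \<rho> x y" "\<rho> x x = 0" "\<rho> x y = \<rho> y x" for x y
    unfolding \<rho>_def using D_sym by simp_all
  show "0 < \<rho> x y" if "x \<noteq> y" for x y
    unfolding \<rho>_def using one_le_D[OF that] by simp
  fix w x y z
  have "\<rho> w z \<le> (K\<^sup>2 * max (D w x) (max (D x y) (D y z))) powr (1 / \<beta>)"
    unfolding \<rho>_def using D_four_point D_nonneg \<beta>_ge by (intro powr_mono2) auto
  also have "\<dots> = 2 * max (D w x) (max (D x y) (D y z)) powr (1 / \<beta>)"
    using D_nonneg by (simp add: powr_mult K_square_powr)
  also have "\<dots> = 2 * max (\<rho> w x) (max (\<rho> x y) (\<rho> y z))"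
    unfolding \<rho>_def using D_nonneg \<beta>_ge by (simp add: max_powr le_max_iff_disj)
  finally show "\<rho> w z \<le> 2 * max (\<rho> w x) (max (\<rho> x y) (\<rho> y z))" .
qed

sublocale snowflake: four_point_quasimetric \<rho>
  by (rule four_point_quasimetric_\<rho>)

abbreviation d :: "'a \<Rightarrow> 'a \<Rightarrow> real" where
  "d \<equiv> chain_metric \<rho>"

lemma \<rho>_powr_\<beta>: "\<rho> x y powr \<beta> = D x y"
  unfolding \<rho>_def using D_nonneg \<beta>_ge by (simp add: powr_powr)

lemma d_powr_le_D: "d x y powr \<beta> \<le> D x y"
  using snowflake.chain_metric_le[of x y] snowflake.chain_metric_nonneg[of x y] \<beta>_ge
  by (metis \<rho>_powr_\<beta> powr_mono2 order_less_le_trans zero_less_numeral le_less)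

lemma D_le_d_powr: "D x y \<le> 2 powr \<beta> * d x y powr \<beta>"
proof -
  have "D x y = \<rho> x y powr \<beta>" by (simp add: \<rho>_powr_\<beta>)
  also have "\<dots> \<le> (2 * d x y) powr \<beta>"
    using snowflake.chain_metric_ge[of x y] snowflake.nonneg[of x y] \<beta>_ge by (intro powr_mono2) auto
  also have "\<dots> = 2 powr \<beta> * d x y powr \<beta>" using snowflake.chain_metric_nonneg by (simp add: powr_mult)
  finally show ?thesis .
qed

lemma gball_d_subset_D:
  assumes "0 < r"
  shows "gball d x r \<subseteq> {w. D x w < (2 * r) powr \<beta>}"
proof
  fix w assume "w \<in> gball d x r"
  hence "\<rho> x w < 2 * r" using snowflake.chain_metric_ge[of x w] by (simp add: gball_def)
  hence "\<rho> x w powr \<beta> < (2 * r) powr \<beta>" using snowflake.nonneg \<beta>_ge by (intro powr_less_mono2) auto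
  thus "w \<in> {w. D x w < (2 * r) powr \<beta>}" using \<rho>_powr_\<beta> by simp
qed

lemma D_subset_gball_d:
  assumes "0 < r"
  shows "{w. D x w < r powr \<beta>} \<subseteq> gball d x r"
proof
  fix w assume "w \<in> {w. D x w < r powr \<beta>}"
  hence "D x w powr (1 / \<beta>) < (r powr \<beta>) powr (1 / \<beta>)"
    using D_nonneg \<beta>_ge by (intro powr_less_mono2) auto
  hence "\<rho> x w < r" unfolding \<rho>_def using assms \<beta>_ge by (simp add: powr_powr)
  thus "w \<in> gball d x r" using snowflake.chain_metric_le[of x w] by (simp add: gball_def)
qed

lemma D_subset_gball_R:
  assumes "0 < t"
  shows "{w. D x w < t} \<subseteq> gball R x (t / mass x)"
proof
  fix w assume w: "w \<in> {w. D x w < t}"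
  show "w \<in> gball R x (t / mass x)"
  proof (cases "w = x")
    case False
    hence "R x w * mass x < t" using mass_R_le_D[of x w] w by simp
    thus ?thesis using mass_pos[of x] by (simp add: gball_def field_simps)
  qed (use assms mass_pos[of x] in \<open>simp add: gball_def\<close>)
qed

lemma finite_D_ball: "finite {w. D x w < t}"
proof (cases "0 < t")
  case True
  thus ?thesis using D_subset_gball_R[OF True] finite_gball_R[of "t / mass x" x] mass_pos[of x]
    by (meson divide_pos_pos finite_subset)
next
  case False
  hence "{w. D x w < t} = {}" using D_nonneg by (auto simp: not_less intro: order_trans)
  thus ?thesis by simp
qed

lemma finite_gball_d: "finite (gball d x r)"
proof (cases "0 < r")
  case True
  thus ?thesis using gball_d_subset_D finite_D_ball finite_subset by metis
next
  case False
  hence "gball d x r = {}"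
    using snowflake.chain_metric_nonneg by (auto simp: gball_def not_less intro: order_trans)
  thus ?thesis by simp
qed

lemma gvol_d_eq: "gvol E mu d x r = ennreal (vol (gball d x r))"
  unfolding gvol_def vol_def using gmeas_finite[OF finite_gball_d] .

section \<open>Comparing balls of the new metric with resistance balls\<close>


definition \<Lambda> :: real where
  "\<Lambda> = 2 * 2 powr \<beta> * K\<^sub>1"

lemma \<Lambda>_ge: "1 \<le> \<Lambda>"
proof -
  have "1 \<le> 2 powr \<beta>" using \<beta>_ge by (intro ge_one_powr_ge_zero) auto
  hence "1 * 1 \<le> (2 * 2 powr \<beta>) * K\<^sub>1" using K\<^sub>1_ge by (intro mult_mono) auto
  thus ?thesis unfolding \<Lambda>_def by simp
qed

lemma gball_d_subset_gball_R:
  assumes "x \<noteq> y"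
  shows "gball d x (d x y) \<subseteq> gball R x (\<Lambda> * R x y)"
proof
  fix w assume "w \<in> gball d x (d x y)"
  hence "D x w < (2 * d x y) powr \<beta>"
    using gball_d_subset_D[OF snowflake.chain_metric_pos[OF assms]] by blast
  also have "\<dots> = 2 powr \<beta> * d x y powr \<beta>" using snowflake.chain_metric_nonneg by (simp add: powr_mult)
  also have "\<dots> \<le> 2 powr \<beta> * (K\<^sub>1 * h x (R x y))"
    using d_powr_le_D[of x y] D_le_h[of x y] by (intro mult_left_mono) auto
  also have "\<dots> \<le> \<Lambda> * h x (R x y)"
    unfolding \<Lambda>_def using h_nonneg[OF R_nonneg, of x x y] K\<^sub>1_ge by (simp add: mult_right_mono)
  also have "\<dots> \<le> h x (\<Lambda> * R x y)" by (rule h_scale_ge[OF R_pos[OF assms] \<Lambda>_ge])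
  finally have "h x (\<Lambda> * R x y) > D x w" .
  hence "\<not> \<Lambda> * R x y \<le> R x w"
    using h_le_D[of x w] h_mono[of "\<Lambda> * R x y" "R x w" x] R_pos[OF assms] \<Lambda>_ge by force
  thus "w \<in> gball R x (\<Lambda> * R x y)" by (simp add: gball_def)
qed

lemma gball_R_subset_gball_d:
  assumes "x \<noteq> y"
  shows "gball R x (R x y / \<Lambda>) \<subseteq> gball d x (d x y)"
proof
  fix w assume "w \<in> gball R x (R x y / \<Lambda>)"
  hence w: "R x w \<le> 1 / \<Lambda> * R x y" by (simp add: gball_def)
  have "D x w \<le> K\<^sub>1 * h x (R x w)" by (rule D_le_h)
  also have "\<dots> \<le> K\<^sub>1 * h x (1 / \<Lambda> * R x y)"
    using w R_nonneg[of x w] K\<^sub>1_ge by (intro mult_left_mono h_mono) auto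
  also have "\<dots> \<le> K\<^sub>1 * (1 / \<Lambda> * h x (R x y))"
    using h_scale_le[OF R_pos[OF assms], of "1 / \<Lambda>"] \<Lambda>_ge K\<^sub>1_ge by (intro mult_left_mono) auto
  also have "\<dots> \<le> K\<^sub>1 * (1 / \<Lambda> * (2 powr \<beta> * d x y powr \<beta>))"
    using h_le_D[of x y] D_le_d_powr[of x y] K\<^sub>1_ge \<Lambda>_ge by (intro mult_left_mono) auto
  also have "\<dots> = d x y powr \<beta> / 2" unfolding \<Lambda>_def using K\<^sub>1_ge by (simp add: field_simps)
  also have "\<dots> < d x y powr \<beta>" using snowflake.chain_metric_pos[OF assms] by simp
  finally show "w \<in> gball d x (d x y)"
    using D_subset_gball_d[OF snowflake.chain_metric_pos[OF assms]] by blast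
qed

lemma vol_gball_d_le:
  assumes "x \<noteq> y"
  shows "vol (gball d x (d x y)) \<le> C\<^sub>D * \<Lambda> powr \<gamma> * V x (R x y)"
proof -
  have r: "0 < R x y" using R_pos[OF assms] .
  have "vol (gball d x (d x y)) \<le> vol (gball R x (\<Lambda> * R x y))"
    using gball_d_subset_gball_R[OF assms] finite_gball_R[of "\<Lambda> * R x y" x] \<Lambda>_ge r
    by (intro vol_mono) auto
  also have "\<dots> = V x (\<Lambda> * R x y)" using V_eq_vol[of "\<Lambda> * R x y" x] \<Lambda>_ge r by simp
  also have "\<dots> \<le> C\<^sub>D * (\<Lambda> * R x y / R x y) powr \<gamma> * V x (R x y)"
    using \<Lambda>_ge r by (intro V_polynomial_growth) auto
  finally show ?thesis using r by simp
qed

lemma V_le_vol_gball_d: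
  assumes "x \<noteq> y"
  shows "V x (R x y) \<le> C\<^sub>D * \<Lambda> powr \<gamma> * vol (gball d x (d x y))"
proof -
  have r: "0 < R x y" using R_pos[OF assms] .
  have "V x (R x y) \<le> C\<^sub>D * (R x y / (R x y / \<Lambda>)) powr \<gamma> * V x (R x y / \<Lambda>)"
    using \<Lambda>_ge r by (intro V_polynomial_growth) (auto simp: divide_le_eq)
  also have "R x y / (R x y / \<Lambda>) = \<Lambda>" using r \<Lambda>_ge by simp
  also have "V x (R x y / \<Lambda>) \<le> vol (gball d x (d x y))"
    using V_eq_vol[of "R x y / \<Lambda>" x] r \<Lambda>_ge gball_R_subset_gball_d[OF assms]
    by (simp add: vol_mono finite_gball_d)
  finally show ?thesis using C\<^sub>D_ge by (simp add: mult_left_mono)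
qed

lemma R_vol_gball_d_le:
  assumes "x \<noteq> y"
  shows "R x y * vol (gball d x (d x y)) \<le> C\<^sub>D * \<Lambda> powr \<gamma> * 2 powr \<beta> * d x y powr \<beta>"
proof -
  have "R x y * vol (gball d x (d x y)) \<le> R x y * (C\<^sub>D * \<Lambda> powr \<gamma> * V x (R x y))"
    using vol_gball_d_le[OF assms] R_nonneg by (intro mult_left_mono)
  also have "\<dots> = C\<^sub>D * \<Lambda> powr \<gamma> * h x (R x y)" by (simp add: h_def)
  also have "\<dots> \<le> C\<^sub>D * \<Lambda> powr \<gamma> * (2 powr \<beta> * d x y powr \<beta>)"
    using h_le_D[of x y] D_le_d_powr[of x y] C\<^sub>D_ge by (intro mult_left_mono) auto
  finally show ?thesis by (simp add: mult.assoc)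
qed

lemma d_powr_le_R_vol_gball_d:
  assumes "x \<noteq> y"
  shows "d x y powr \<beta> \<le> K\<^sub>1 * C\<^sub>D * \<Lambda> powr \<gamma> * (R x y * vol (gball d x (d x y)))"
proof -
  have "d x y powr \<beta> \<le> K\<^sub>1 * h x (R x y)"
    using d_powr_le_D[of x y] D_le_h[of x y] by simp
  also have "\<dots> \<le> K\<^sub>1 * (R x y * (C\<^sub>D * \<Lambda> powr \<gamma> * vol (gball d x (d x y))))"
    unfolding h_def using V_le_vol_gball_d[OF assms] R_nonneg K\<^sub>1_ge
    by (intro mult_left_mono) auto
  finally show ?thesis by (simp add: ac_simps)
qed

lemma R_gvol_d_comparable:
  "\<exists>c C. c > 0 \<and> C > 0 \<and> (\<forall>x y.
     ennreal (c * d x y powr \<beta>) \<le> ennreal (R x y) * gvol E mu d x (d x y) \<and>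
     ennreal (R x y) * gvol E mu d x (d x y) \<le> ennreal (C * d x y powr \<beta>))"
proof (intro exI conjI allI)
  let ?A = "K\<^sub>1 * C\<^sub>D * \<Lambda> powr \<gamma>"
  show "0 < 1 / ?A" "0 < C\<^sub>D * \<Lambda> powr \<gamma> * 2 powr \<beta>" using K\<^sub>1_ge C\<^sub>D_ge \<Lambda>_ge by auto
  fix x y
  have eq: "ennreal (R x y) * gvol E mu d x (d x y) = ennreal (R x y * vol (gball d x (d x y)))"
    unfolding gvol_d_eq using R_nonneg vol_nonneg by (simp add: ennreal_mult)
  show "ennreal (1 / ?A * d x y powr \<beta>) \<le> ennreal (R x y) * gvol E mu d x (d x y)"
  proof (cases "x = y")
    case False
    have "1 / ?A * d x y powr \<beta> \<le> R x y * vol (gball d x (d x y))"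
      using d_powr_le_R_vol_gball_d[OF False] K\<^sub>1_ge C\<^sub>D_ge \<Lambda>_ge by (simp add: field_simps)
    thus ?thesis unfolding eq by (rule ennreal_leI)
  qed simp
  show "ennreal (R x y) * gvol E mu d x (d x y) \<le> ennreal (C\<^sub>D * \<Lambda> powr \<gamma> * 2 powr \<beta> * d x y powr \<beta>)"
  proof (cases "x = y")
    case False thus ?thesis unfolding eq by (intro ennreal_leI R_vol_gball_d_le)
  qed simp
qed

section \<open>Quasisymmetry\<close>


text \<open>Inverting the growth of \<open>h x\<close>: for \<open>\<sigma> \<ge> \<tau>\<close> monotonicity of \<open>V\<close> suffices, for \<open>\<sigma> < \<tau>\<close>
  polynomial growth of \<open>V\<close> gives \<open>(\<sigma>/\<tau>) powr (1 + \<gamma>) \<le> C\<^sub>D * h x \<sigma> / h x \<tau>\<close>.\<close>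

lemma radius_ratio_le:
  assumes "0 < \<sigma>" "0 < \<tau>"
  shows "\<sigma> / \<tau> \<le> max (h x \<sigma> / h x \<tau>) ((C\<^sub>D * (h x \<sigma> / h x \<tau>)) powr (1 / (1 + \<gamma>)))"
proof (cases "\<tau> \<le> \<sigma>")
  case True
  hence "\<sigma> * V x \<tau> \<le> \<sigma> * V x \<sigma>" using assms V_mono[of \<tau> \<sigma> x] by simp
  hence "\<sigma> / \<tau> \<le> h x \<sigma> / h x \<tau>" using assms V_pos[of \<tau> x] by (simp add: h_def field_simps)
  thus ?thesis by simp
next
  case False
  define u where "u = \<sigma> / \<tau>"
  have u: "0 < u" "u \<le> 1" using assms False by (auto simp: u_def)
  have "V x \<tau> \<le> C\<^sub>D * (\<tau> / \<sigma>) powr \<gamma> * V x \<sigma>"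
    using assms False by (intro V_polynomial_growth) auto
  also have "(\<tau> / \<sigma>) powr \<gamma> = 1 / u powr \<gamma>" using assms by (simp add: u_def powr_divide)
  finally have "u powr \<gamma> * V x \<tau> \<le> C\<^sub>D * V x \<sigma>" using u by (simp add: field_simps)
  hence "u * u powr \<gamma> \<le> C\<^sub>D * (u * V x \<sigma> / V x \<tau>)"
    using u V_pos[OF assms(2), of x] by (simp add: field_simps)
  also have "u * V x \<sigma> / V x \<tau> = h x \<sigma> / h x \<tau>" by (simp add: h_def u_def)
  finally have "u powr (1 + \<gamma>) \<le> C\<^sub>D * (h x \<sigma> / h x \<tau>)" using u by (simp add: powr_add)
  hence "(u powr (1 + \<gamma>)) powr (1 / (1 + \<gamma>)) \<le> (C\<^sub>D * (h x \<sigma> / h x \<tau>)) powr (1 / (1 + \<gamma>))"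
    using \<gamma>_ge by (intro powr_mono2) auto
  hence "u \<le> (C\<^sub>D * (h x \<sigma> / h x \<tau>)) powr (1 / (1 + \<gamma>))"
    using u \<gamma>_ge by (simp add: powr_powr)
  thus ?thesis unfolding u_def by (simp add: le_max_iff_disj)
qed

definition A\<^sub>q :: real where
  "A\<^sub>q = K\<^sub>1 * C\<^sub>D * 2 powr \<beta>"

definition \<eta> :: "real \<Rightarrow> real" where
  "\<eta> = (\<lambda>s. max s (s powr (1 / (1 + \<gamma>)))) \<circ> (\<lambda>t. A\<^sub>q * t powr \<beta>)"

lemma homeomorphism_\<eta>: "\<exists>\<eta>'. homeomorphism {0..} {0..} \<eta> \<eta>'"
proof
  show "homeomorphism {0..} {0..} \<eta>
      ((\<lambda>s. (s / A\<^sub>q) powr (1 / \<beta>)) \<circ> (\<lambda>s. min s (s powr (1 / (1 / (1 + \<gamma>))))))"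
    unfolding \<eta>_def
  proof (rule homeomorphism_compose[OF homeomorphism_scaled_powr homeomorphism_max_powr])
    show "0 < A\<^sub>q" using K\<^sub>1_ge C\<^sub>D_ge by (simp add: A\<^sub>q_def)
  qed (use \<beta>_ge \<gamma>_ge in auto)
qed

lemma h_ratio_le_d_ratio:
  assumes "x \<noteq> y" "x \<noteq> z"
  shows "C\<^sub>D * (h x (R x y) / h x (R x z)) \<le> A\<^sub>q * (d x y / d x z) powr \<beta>"
proof -
  have pos: "0 < h x (R x z)" "0 < d x z powr \<beta>"
    using R_pos[OF assms(2)] V_pos[OF R_pos[OF assms(2)], of x] snowflake.chain_metric_pos[OF assms(2)]
    by (simp_all add: h_def)
  have "h x (R x y) \<le> 2 powr \<beta> * d x y powr \<beta>" using order_trans[OF h_le_D D_le_d_powr] .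
  moreover have "d x z powr \<beta> \<le> K\<^sub>1 * h x (R x z)" using order_trans[OF d_powr_le_D D_le_h] .
  ultimately have "h x (R x y) * d x z powr \<beta> \<le> (2 powr \<beta> * d x y powr \<beta>) * (K\<^sub>1 * h x (R x z))"
    using pos h_nonneg[OF R_nonneg, of x x y] by (intro mult_mono) auto
  hence "h x (R x y) / h x (R x z) \<le> K\<^sub>1 * 2 powr \<beta> * (d x y powr \<beta> / d x z powr \<beta>)"
    using pos by (simp add: field_simps)
  hence "C\<^sub>D * (h x (R x y) / h x (R x z)) \<le> C\<^sub>D * (K\<^sub>1 * 2 powr \<beta> * (d x y powr \<beta> / d x z powr \<beta>))"
    using C\<^sub>D_ge by (intro mult_left_mono) auto
  thus ?thesis using snowflake.chain_metric_nonneg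
    by (simp add: A\<^sub>q_def powr_divide ac_simps)
qed

lemma R_ratio_le_\<eta>:
  assumes "x \<noteq> z"
  shows "R x y / R x z \<le> \<eta> (d x y / d x z)"
proof (cases "y = x")
  case True
  thus ?thesis using K\<^sub>1_ge C\<^sub>D_ge by (simp add: \<eta>_def A\<^sub>q_def)
next
  case False
  let ?q = "h x (R x y) / h x (R x z)" and ?t = "A\<^sub>q * (d x y / d x z) powr \<beta>"
  have "0 \<le> ?q" using h_nonneg R_nonneg by simp
  have "C\<^sub>D * ?q \<le> ?t" using h_ratio_le_d_ratio False assms by auto
  moreover have "?q \<le> C\<^sub>D * ?q" using \<open>0 \<le> ?q\<close> C\<^sub>D_ge mult_right_mono[of 1 C\<^sub>D ?q] by simp
  ultimately have "max ?q ((C\<^sub>D * ?q) powr (1 / (1 + \<gamma>))) \<le> max ?t (?t powr (1 / (1 + \<gamma>)))"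
    using \<open>0 \<le> ?q\<close> C\<^sub>D_ge \<gamma>_ge by (intro max.mono powr_mono2) auto
  moreover have "R x y / R x z \<le> max ?q ((C\<^sub>D * ?q) powr (1 / (1 + \<gamma>)))"
    by (rule radius_ratio_le) (use R_pos False assms in auto)
  ultimately show ?thesis unfolding \<eta>_def comp_def by linarith
qed

lemma quasisymmetric_d_R: "quasisymmetric_to d R"
  unfolding quasisymmetric_to_def using homeomorphism_\<eta> R_ratio_le_\<eta> by blast

section \<open>Volume growth of the balls of the new metric\<close>

definition \<theta> :: real where
  "\<theta> = \<gamma> / (1 + \<gamma>)"

lemma \<theta>_bounds: "0 < \<theta>" "\<theta> < 1"
  unfolding \<theta>_def using \<gamma>_ge by auto

lemma V_ratio_le_h_ratio_powr:
  assumes "0 < \<rho>'" "\<rho>' \<le> \<sigma>"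
  shows "V x \<sigma> \<le> C\<^sub>D powr (1 / (1 + \<gamma>)) * (h x \<sigma> / h x \<rho>') powr \<theta> * V x \<rho>'"
proof -
  define u T where "u = V x \<sigma> / V x \<rho>'" and "T = \<sigma> / \<rho>'"
  have pos: "0 < V x \<rho>'" "0 < u" "0 < T"
    using assms V_pos[of \<rho>' x] V_pos[of \<sigma> x] by (auto simp: u_def T_def)
  have "u \<le> C\<^sub>D * T powr \<gamma>"
    using V_polynomial_growth[OF assms, of x] pos by (simp add: u_def T_def field_simps)
  hence "u * u powr \<gamma> \<le> C\<^sub>D * T powr \<gamma> * u powr \<gamma>" using pos by (simp add: mult_right_mono)
  hence "u powr (1 + \<gamma>) \<le> C\<^sub>D * (T * u) powr \<gamma>"
    using pos by (simp add: powr_add powr_mult mult.assoc)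
  hence "(u powr (1 + \<gamma>)) powr (1 / (1 + \<gamma>)) \<le> (C\<^sub>D * (T * u) powr \<gamma>) powr (1 / (1 + \<gamma>))"
    using \<gamma>_ge by (intro powr_mono2) auto
  hence "u \<le> C\<^sub>D powr (1 / (1 + \<gamma>)) * (T * u) powr \<theta>"
    using pos \<gamma>_ge C\<^sub>D_ge by (simp add: powr_powr powr_mult \<theta>_def)
  moreover have "T * u = h x \<sigma> / h x \<rho>'" using pos by (simp add: h_def u_def T_def)
  ultimately show ?thesis using pos by (simp add: u_def field_simps)
qed

lemma exists_large_h: "\<exists>w. b \<le> K\<^sub>1 * h x (R x w)"
proof -
  obtain w where w: "max b 0 / mass x < R x w" using exists_far_vertex by blast
  hence "max b 0 < R x w * mass x" using mass_pos[of x] by (simp add: field_simps)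
  moreover have "x \<noteq> w" using w mass_pos[of x] by (auto simp: divide_less_0_iff)
  hence "R x w * mass x \<le> K\<^sub>1 * h x (R x w)" using mass_R_le_D D_le_h[of x w] by fastforce
  ultimately show ?thesis by (intro exI[of _ w]) linarith
qed

text \<open>The largest resistance ball inside \<open>{w. D x w < b}\<close> has a radius \<open>\<rho>'\<close> with
  \<open>h x \<rho>'\<close> comparable to \<open>b\<close>; it is found as the infimum of the resistances \<open>R x w\<close> with
  \<open>b \<le> K\<^sub>1 * h x (R x w)\<close>.\<close>

lemma inner_resistance_radius:
  assumes "0 < b"
  obtains \<rho>' where "0 < \<rho>'" "gball R x \<rho>' \<subseteq> {w. D x w < b}" "b \<le> 2 * K\<^sub>1 * C\<^sub>D * h x \<rho>'"
proof -
  define Z where "Z = {R x w | w. b \<le> K\<^sub>1 * h x (R x w)}"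
  have "Z \<noteq> {}" using exists_large_h[of b x] unfolding Z_def by blast
  have bdd: "bdd_below Z" unfolding Z_def by (rule bdd_belowI[of _ 0]) (auto simp: R_nonneg)
  define \<rho>' where "\<rho>' = Inf Z"
  have "1 / mass x \<le> z" if "z \<in> Z" for z
  proof -
    obtain w where w: "z = R x w" "b \<le> K\<^sub>1 * h x (R x w)" using \<open>z \<in> Z\<close> Z_def by blast
    hence "w \<noteq> x" using assms by (auto simp: h_def)
    thus ?thesis using R_ge_inverse_mass w(1) by simp
  qed
  hence "1 / mass x \<le> \<rho>'" unfolding \<rho>'_def by (intro cInf_greatest \<open>Z \<noteq> {}\<close>)
  moreover have "0 < 1 / mass x" using mass_pos[of x] by simp
  ultimately have "0 < \<rho>'" by linarith
  moreover have "gball R x \<rho>' \<subseteq> {w. D x w < b}"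
  proof
    fix w assume "w \<in> gball R x \<rho>'"
    hence "R x w < \<rho>'" by (simp add: gball_def)
    have "\<not> b \<le> K\<^sub>1 * h x (R x w)"
    proof
      assume "b \<le> K\<^sub>1 * h x (R x w)"
      hence "R x w \<in> Z" unfolding Z_def by blast
      hence "\<rho>' \<le> R x w" unfolding \<rho>'_def by (rule cInf_lower[OF _ bdd])
      thus False using \<open>R x w < \<rho>'\<close> by simp
    qed
    thus "w \<in> {w. D x w < b}" using D_le_h[of x w] by simp
  qed
  moreover have "b \<le> 2 * K\<^sub>1 * C\<^sub>D * h x \<rho>'"
  proof -
    obtain z where "z \<in> Z" "z < 2 * \<rho>'"
      using cInf_less_iff[OF \<open>Z \<noteq> {}\<close> bdd, of "2 * \<rho>'"] \<open>0 < \<rho>'\<close> unfolding \<rho>'_def by auto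
    then obtain w where w: "R x w < 2 * \<rho>'" "b \<le> K\<^sub>1 * h x (R x w)" unfolding Z_def by blast
    have "h x (R x w) \<le> h x (2 * \<rho>')" using w(1) R_nonneg[of x w] by (intro h_mono) auto
    hence "K\<^sub>1 * h x (R x w) \<le> K\<^sub>1 * h x (2 * \<rho>')" using K\<^sub>1_ge by (intro mult_left_mono) auto
    hence "b \<le> K\<^sub>1 * h x (2 * \<rho>')" using w(2) by linarith
    also have "\<dots> \<le> K\<^sub>1 * (2 * C\<^sub>D * h x \<rho>')"
      using h_doubling[OF \<open>0 < \<rho>'\<close>] K\<^sub>1_ge by (intro mult_left_mono) auto
    finally show ?thesis by (simp add: ac_simps)
  qed
  ultimately show ?thesis by (rule that)
qed

lemma outer_resistance_radius:
  assumes "0 < a"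
  obtains "{w. D x w < a} \<subseteq> {x}"
    | \<sigma> where "0 < \<sigma>" "vol {w. D x w < a} \<le> C\<^sub>D * V x \<sigma>" "h x \<sigma> < a"
proof -
  define S where "S = {w. D x w < a}"
  have "finite S" "x \<in> S" using finite_D_ball assms by (auto simp: S_def)
  define \<sigma> where "\<sigma> = Max (R x ` S)"
  have "\<sigma> \<in> R x ` S" unfolding \<sigma>_def using \<open>finite S\<close> \<open>x \<in> S\<close> by (intro Max_in) auto
  then obtain w where w: "w \<in> S" "R x w = \<sigma>" by blast
  have le: "R x v \<le> \<sigma>" if "v \<in> S" for v
    unfolding \<sigma>_def using \<open>finite S\<close> that by (intro Max_ge) auto
  show ?thesis
  proof (cases "\<sigma> = 0")
    case True
    have "S \<subseteq> {x}"
    proof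
      fix v assume "v \<in> S"
      hence "R x v \<le> 0" using le True by simp
      thus "v \<in> {x}" using R_pos[of x v] by (cases "v = x") auto
    qed
    thus ?thesis unfolding S_def by (rule that(1))
  next
    case False
    hence "0 < \<sigma>" using w R_nonneg[of x w] by simp
    have "S \<subseteq> gball R x (2 * \<sigma>)" using le \<open>0 < \<sigma>\<close> by (fastforce simp: gball_def)
    hence "vol S \<le> V x (2 * \<sigma>)"
      using V_eq_vol[of "2 * \<sigma>" x] finite_gball_R[of "2 * \<sigma>" x] \<open>0 < \<sigma>\<close> by (simp add: vol_mono)
    also have "\<dots> \<le> C\<^sub>D * V x \<sigma>" by (rule V_doubling[OF \<open>0 < \<sigma>\<close>])
    finally have "vol S \<le> C\<^sub>D * V x \<sigma>" .
    moreover have "h x \<sigma> < a" using h_le_D[of x w] w by (simp add: S_def)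
    ultimately show ?thesis unfolding S_def by (rule that(2)[OF \<open>0 < \<sigma>\<close>])
  qed
qed

definition C\<^sub>g :: real where
  "C\<^sub>g = C\<^sub>D * C\<^sub>D powr (1 / (1 + \<gamma>)) * (2 * K\<^sub>1 * C\<^sub>D) powr \<theta>"

lemma C\<^sub>D_le_C\<^sub>g: "C\<^sub>D \<le> C\<^sub>g"
proof -
  have "5 * 2 \<le> K\<^sub>1 * C\<^sub>D" using mult_mono[OF K\<^sub>1_ge C\<^sub>D_ge] K\<^sub>1_ge by simp
  hence "1 \<le> C\<^sub>D powr (1 / (1 + \<gamma>))" "1 \<le> (2 * K\<^sub>1 * C\<^sub>D) powr \<theta>"
    using C\<^sub>D_ge \<gamma>_ge \<theta>_bounds by (auto intro!: ge_one_powr_ge_zero)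
  hence "C\<^sub>D * (1 * 1) \<le> C\<^sub>D * (C\<^sub>D powr (1 / (1 + \<gamma>)) * (2 * K\<^sub>1 * C\<^sub>D) powr \<theta>)"
    using C\<^sub>D_ge by (intro mult_left_mono mult_mono) auto
  thus ?thesis by (simp add: C\<^sub>g_def mult.assoc)
qed

lemma C\<^sub>D_le_growth_factor:
  assumes "0 < b" "b \<le> a"
  shows "C\<^sub>D \<le> C\<^sub>g * (a / b) powr \<theta>"
proof -
  have "1 \<le> (a / b) powr \<theta>" using assms \<theta>_bounds by (intro ge_one_powr_ge_zero) auto
  thus ?thesis using C\<^sub>D_le_C\<^sub>g C\<^sub>D_ge mult_mono[of C\<^sub>D C\<^sub>g 1 "(a / b) powr \<theta>"] by simp
qed

lemma V_le_by_h_bounds: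
  assumes "0 < \<rho>'" "0 < \<sigma>" "0 < b" "b \<le> a"
    and "b \<le> 2 * K\<^sub>1 * C\<^sub>D * h x \<rho>'" "h x \<sigma> < a"
  shows "C\<^sub>D * V x \<sigma> \<le> C\<^sub>g * (a / b) powr \<theta> * V x \<rho>'"
proof (cases "\<sigma> \<le> \<rho>'")
  case True
  thus ?thesis
    using V_mono[OF assms(2) True] C\<^sub>D_le_growth_factor[OF assms(3,4)] C\<^sub>D_ge V_nonneg
    by (intro mult_mono) auto
next
  case False
  have "0 < h x \<rho>'" using assms(1) V_pos[OF assms(1), of x] by (simp add: h_def)
  have "0 < 2 * K\<^sub>1 * C\<^sub>D" using K\<^sub>1_ge C\<^sub>D_ge by simp
  have "h x \<sigma> / h x \<rho>' \<le> a / h x \<rho>'"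
    using assms(6) \<open>0 < h x \<rho>'\<close> by (simp add: divide_right_mono)
  also have "\<dots> \<le> a / (b / (2 * K\<^sub>1 * C\<^sub>D))"
    using assms(3-5) \<open>0 < 2 * K\<^sub>1 * C\<^sub>D\<close> \<open>0 < h x \<rho>'\<close>
    by (intro divide_left_mono) (auto simp: divide_le_eq mult.commute)
  also have "\<dots> = 2 * K\<^sub>1 * C\<^sub>D * (a / b)" by simp
  finally have "(h x \<sigma> / h x \<rho>') powr \<theta> \<le> (2 * K\<^sub>1 * C\<^sub>D * (a / b)) powr \<theta>"
    using h_nonneg[of \<sigma> x] assms(2) \<open>0 < h x \<rho>'\<close> \<theta>_bounds by (intro powr_mono2) auto
  also have "\<dots> = (2 * K\<^sub>1 * C\<^sub>D) powr \<theta> * (a / b) powr \<theta>"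
    by (rule powr_mult)
  finally have ratio: "(h x \<sigma> / h x \<rho>') powr \<theta> \<le> (2 * K\<^sub>1 * C\<^sub>D) powr \<theta> * (a / b) powr \<theta>" .
  have "V x \<sigma> \<le> C\<^sub>D powr (1 / (1 + \<gamma>)) * (h x \<sigma> / h x \<rho>') powr \<theta> * V x \<rho>'"
    by (rule V_ratio_le_h_ratio_powr[OF assms(1)]) (use False in auto)
  also have "\<dots> \<le> C\<^sub>D powr (1 / (1 + \<gamma>)) * ((2 * K\<^sub>1 * C\<^sub>D) powr \<theta> * (a / b) powr \<theta>) * V x \<rho>'"
    using ratio V_nonneg[of x \<rho>'] by (intro mult_right_mono mult_left_mono) auto
  finally show ?thesis using C\<^sub>D_ge by (simp add: C\<^sub>g_def ac_simps mult_left_mono)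
qed

lemma D_ball_growth:
  assumes "0 < b" "b \<le> a"
  shows "vol {w. D x w < a} \<le> C\<^sub>g * (a / b) powr \<theta> * vol {w. D x w < b}"
proof -
  obtain \<rho>' where \<rho>': "0 < \<rho>'" "gball R x \<rho>' \<subseteq> {w. D x w < b}" "b \<le> 2 * K\<^sub>1 * C\<^sub>D * h x \<rho>'"
    using inner_resistance_radius[OF assms(1)] .
  have "vol {w. D x w < a} \<le> C\<^sub>g * (a / b) powr \<theta> * V x \<rho>'"
  proof (rule outer_resistance_radius[of a x])
    show "0 < a" using assms by simp
  next
    assume "{w. D x w < a} \<subseteq> {x}"
    hence "vol {w. D x w < a} \<le> vol {x}" by (intro vol_mono) auto
    also have "\<dots> \<le> V x \<rho>'" using mass_le_V[OF \<rho>'(1)] by (simp add: vol_def)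
    also have "\<dots> \<le> C\<^sub>g * (a / b) powr \<theta> * V x \<rho>'"
      using C\<^sub>D_le_growth_factor[OF assms] C\<^sub>D_ge V_nonneg mult_right_mono[of 1 _ "V x \<rho>'"] by simp
    finally show ?thesis .
  next
    fix \<sigma> assume "0 < \<sigma>" "vol {w. D x w < a} \<le> C\<^sub>D * V x \<sigma>" "h x \<sigma> < a"
    thus ?thesis using V_le_by_h_bounds[OF \<rho>'(1) _ assms \<rho>'(3), of \<sigma>] by linarith
  qed
  also have "\<dots> \<le> C\<^sub>g * (a / b) powr \<theta> * vol {w. D x w < b}"
    using V_eq_vol[OF \<rho>'(1)] vol_mono[OF finite_D_ball \<rho>'(2)] C\<^sub>D_le_growth_factor[OF assms] C\<^sub>D_ge
    by (intro mult_left_mono) auto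
  finally show ?thesis .
qed


definition \<alpha> :: real where
  "\<alpha> = max (\<beta> * \<theta>) 1"

lemma \<alpha>_bounds: "1 \<le> \<alpha>" "\<alpha> < \<beta>"
proof -
  show "1 \<le> \<alpha>" unfolding \<alpha>_def by simp
  have "\<beta> * \<theta> < \<beta> * 1" using \<theta>_bounds \<beta>_ge by (intro mult_strict_left_mono) auto
  thus "\<alpha> < \<beta>" unfolding \<alpha>_def using \<beta>_ge by simp
qed

lemma gvol_d_growth:
  "\<exists>C>0. \<forall>x r s. r > s \<and> s > 0 \<longrightarrow> gvol E mu d x r \<le> ennreal (C * (r / s) powr \<alpha>) * gvol E mu d x s"
proof (intro exI[of _ "C\<^sub>g * 2 powr (\<beta> * \<theta>)"] conjI allI impI)
  show "0 < C\<^sub>g * 2 powr (\<beta> * \<theta>)" using C\<^sub>D_le_C\<^sub>g C\<^sub>D_ge by simp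
  fix x :: 'a and r s :: real
  assume "r > s \<and> s > 0"
  hence rs: "0 < s" "s < r" by auto
  define a b where "a = (2 * r) powr \<beta>" and "b = s powr \<beta>"
  have "0 < b" "b \<le> a" unfolding a_def b_def using rs \<beta>_ge by (auto intro: powr_mono2)
  have "(a / b) powr \<theta> = 2 powr (\<beta> * \<theta>) * (r / s) powr (\<beta> * \<theta>)"
    using rs by (simp add: a_def b_def powr_divide powr_powr powr_mult[symmetric])
  also have "\<dots> \<le> 2 powr (\<beta> * \<theta>) * (r / s) powr \<alpha>"
    unfolding \<alpha>_def using rs by (intro mult_left_mono powr_mono) auto
  finally have q: "(a / b) powr \<theta> \<le> 2 powr (\<beta> * \<theta>) * (r / s) powr \<alpha>" .
  have "vol (gball d x r) \<le> vol {w. D x w < a}"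
    unfolding a_def using gball_d_subset_D rs by (intro vol_mono finite_D_ball) auto
  also have "\<dots> \<le> C\<^sub>g * (a / b) powr \<theta> * vol {w. D x w < b}"
    using D_ball_growth[OF \<open>0 < b\<close> \<open>b \<le> a\<close>] .
  also have "\<dots> \<le> C\<^sub>g * (a / b) powr \<theta> * vol (gball d x s)"
    unfolding b_def using D_subset_gball_d[of s x] rs C\<^sub>D_le_C\<^sub>g C\<^sub>D_ge
    by (intro mult_left_mono vol_mono finite_gball_d) auto
  also have "\<dots> \<le> C\<^sub>g * (2 powr (\<beta> * \<theta>) * (r / s) powr \<alpha>) * vol (gball d x s)"
    using q C\<^sub>D_le_C\<^sub>g C\<^sub>D_ge vol_nonneg by (intro mult_right_mono mult_left_mono) auto
  finally have "vol (gball d x r) \<le> C\<^sub>g * 2 powr (\<beta> * \<theta>) * (r / s) powr \<alpha> * vol (gball d x s)"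
    by (simp add: ac_simps)
  thus "gvol E mu d x r \<le> ennreal (C\<^sub>g * 2 powr (\<beta> * \<theta>) * (r / s) powr \<alpha>) * gvol E mu d x s"
    unfolding gvol_d_eq using C\<^sub>D_le_C\<^sub>g C\<^sub>D_ge vol_nonneg
    by (simp add: ennreal_mult[symmetric] ennreal_leI)
qed

lemma Inf_d_pos: "Inf {d x y | x y. x \<noteq> y} > 0"
proof -
  obtain a b :: 'a where "a \<noteq> b" using nontrivial by blast
  have "1 / 2 \<le> Inf {d x y | x y. x \<noteq> y}"
  proof (rule cInf_greatest)
    show "{d x y | x y. x \<noteq> y} \<noteq> {}" using \<open>a \<noteq> b\<close> by blast
  next
    fix c assume "c \<in> {d x y | x y. x \<noteq> y}"
    then obtain x y where "c = d x y" "x \<noteq> y" by blast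
    moreover have "1 \<le> \<rho> x y" if "x \<noteq> y" for x y
      unfolding \<rho>_def using one_le_D[OF that] \<beta>_ge by (intro ge_one_powr_ge_zero) auto
    ultimately show "1 / 2 \<le> c" using snowflake.chain_metric_ge[of x y] by fastforce
  qed
  thus ?thesis by simp
qed

text \<open>By \<open>(p\<^sub>0)\<close>, an edge \<open>x \<sim> y\<close> has \<open>R x y \<le> 2 / mu x y \<le> L / mass x\<close>, and the resistance
  ball of radius \<open>L / mass x\<close> has volume comparable to \<open>mass x\<close>.\<close>

lemma D_edge_bounded: "\<exists>B. \<forall>x y. E x y \<longrightarrow> D x y \<le> B"
proof -
  obtain p where p: "0 < p" "\<And>x y. E x y \<Longrightarrow> p \<le> mu x y / mass x"
    using p0 unfolding p0_cond_def by blast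
  define L where "L = 2 / p"
  have "D x y \<le> K\<^sub>1 * L * C\<^sub>D * L powr \<gamma>" if "E x y" for x y
  proof -
    have m: "0 < mass x" by (rule mass_pos)
    have pm: "p * mass x \<le> mu x y" using p(2)[OF that] m by (simp add: field_simps)
    hence "p * mass x \<le> 1 * mass x" using mu_le_mass[OF that] by simp
    hence "p \<le> 1" using m by (rule mult_right_le_imp_le)
    hence "1 \<le> L" unfolding L_def using p(1) by simp
    have "R x y \<le> 2 / mu x y" by (rule R_edge_le[OF that])
    also have "\<dots> \<le> L / mass x"
      unfolding L_def using pm p(1) m mu_pos[OF that] by (simp add: field_simps)
    finally have rL: "R x y \<le> L / mass x" .
    have "V x (L / mass x) \<le> C\<^sub>D * ((L / mass x) / (1 / mass x)) powr \<gamma> * V x (1 / mass x)"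
      using m \<open>1 \<le> L\<close> by (intro V_polynomial_growth) (auto simp: divide_right_mono)
    also have "\<dots> = C\<^sub>D * L powr \<gamma> * mass x" using m by (simp add: V_inverse_mass)
    finally have vb: "V x (L / mass x) \<le> C\<^sub>D * L powr \<gamma> * mass x" .
    have "D x y \<le> K\<^sub>1 * h x (R x y)" by (rule D_le_h)
    also have "\<dots> \<le> K\<^sub>1 * h x (L / mass x)"
      using rL R_nonneg[of x y] K\<^sub>1_ge by (intro mult_left_mono h_mono) auto
    also have "\<dots> = K\<^sub>1 * (L / mass x) * V x (L / mass x)" by (simp add: h_def mult.assoc)
    also have "\<dots> \<le> K\<^sub>1 * (L / mass x) * (C\<^sub>D * L powr \<gamma> * mass x)"
      using vb K\<^sub>1_ge \<open>1 \<le> L\<close> m by (intro mult_left_mono) auto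
    also have "\<dots> = K\<^sub>1 * L * C\<^sub>D * L powr \<gamma>" using m by (simp add: field_simps)
    finally show ?thesis .
  qed
  thus ?thesis by blast
qed

lemma d_edge_bounded: "\<exists>C>0. \<forall>x y. E x y \<longrightarrow> d x y \<le> C"
proof -
  obtain B where B: "\<And>x y. E x y \<Longrightarrow> D x y \<le> B" using D_edge_bounded by blast
  have "d x y \<le> max 1 B powr (1 / \<beta>)" if "E x y" for x y
  proof -
    have "d x y \<le> D x y powr (1 / \<beta>)" using snowflake.chain_metric_le by (simp add: \<rho>_def)
    also have "\<dots> \<le> max 1 B powr (1 / \<beta>)"
      using B[OF that] D_nonneg \<beta>_ge by (intro powr_mono2) auto
    finally show ?thesis .
  qed
  moreover have "0 < max 1 B powr (1 / \<beta>)" by simp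
  ultimately show ?thesis by blast
qed

end

theorem proposition6p1:
  fixes E :: "'a \<Rightarrow> 'a \<Rightarrow> bool" and mu :: "'a \<Rightarrow> 'a \<Rightarrow> real"
  assumes "countable (UNIV :: 'a set)" and "infinite (UNIV :: 'a set)"
    and "simple_graph E" and "connected_graph E" and "bounded_degree E"
    and "conductance E mu" and "p0_cond E mu"
    and "volume_doubling E mu (eff_res E mu)"
    and "\<forall>M. \<exists>x y. eff_res E mu x y > M"
    and "\<forall>x r. r > 0 \<longrightarrow> gvol E mu (eff_res E mu) x r < \<infinity>"
  shows "\<exists>d :: 'a \<Rightarrow> 'a \<Rightarrow> real. \<exists>\<alpha> \<beta> :: real. is_metric d \<and> 1 \<le> \<alpha> \<and> \<alpha> < \<beta>
     \<and> quasisymmetric_to d (eff_res E mu)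
     \<and> (\<exists>c C. c > 0 \<and> C > 0 \<and> (\<forall>x y.
          ennreal (c * d x y powr \<beta>) \<le> ennreal (eff_res E mu x y) * gvol E mu d x (d x y) \<and>
          ennreal (eff_res E mu x y) * gvol E mu d x (d x y) \<le> ennreal (C * d x y powr \<beta>)))
     \<and> (\<exists>C>0. \<forall>x r s. r > s \<and> s > 0 \<longrightarrow>
          gvol E mu d x r \<le> ennreal (C * (r / s) powr \<alpha>) * gvol E mu d x s)
     \<and> Inf {d x y | x y. x \<noteq> y} > 0
     \<and> (\<exists>C\<^sub>p>0. \<forall>x y. E x y \<longrightarrow> d x y \<le> C\<^sub>p)
     \<and> (\<forall>x r. r > 0 \<longrightarrow> finite (gball d x r))"
proof -
  have "\<exists>a b :: 'a. a \<noteq> b"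
    using ex_new_if_finite[OF \<open>infinite (UNIV :: 'a set)\<close>, of "{undefined}"] by blast
  then interpret resistance_doubling_graph E mu
    by unfold_locales (use assms in auto)
  show ?thesis
    using snowflake.is_metric_chain_metric \<alpha>_bounds quasisymmetric_d_R R_gvol_d_comparable
      gvol_d_growth Inf_d_pos d_edge_bounded finite_gball_d
    by blast
qed

end
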